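(* Let $k$ be a natural number. For all $n\geq 2^{k-1}k(2k-1)$, $$A_{2k}(n)=B_k^e(n)-B_k^o(n)=C_k^e(n+1)-C_k^o(n+1)=\tfrac12 D_{2k}(n+1).$$
   Context: All partitions are into positive parts unless stated otherwise. $A_{j}(n):=\tfrac12\big(P_1(d,n)+P'_{j-1}(d,n)+P_2(d,n)+P''_{j-1}(d,n)\big)$, where the terms are defined as follows. - $P_1(d,n)$ counts partitions of $n$ into distinct parts with smallest part exceeding $1$. - $P_2(d,n)$ counts partitions of $n$ into distinct parts whose two smallest parts differ by at least $2$ (single-part partitions count vacuously). - $P'_{j-1}(d,n)$ counts partitions of $n$ with all parts distinct except that the smallest part is $1$ with multiplicity $j-1$. - $P''_{j-1}(d,n)$ counts partitions of $n$ into distinct parts except that the second smallest part appears with multiplicity $j-1$, where the two smallest parts differ by $1$. $B_k^e(n)$ (resp. $B_k^o(n)$) is the number of partitions of $n$ having at least one odd part, with largest odd part $2\ell-1$, all of whose parts are odd except for at most $k-1$ pairwise distinct even parts in $[2\ell+2,2\ell+2k-2]$, the number of which is even (resp. odd). $C_k^e(n)$ (resp. $C_k^o(n)$) is the number of pairs $(\lambda,\ell)$ with $\ell\ge1$ and $\lambda$ a partition of $n$ satisfying three conditions: - $\lambda$ contains the part $2\ell$; - the parts not exceeding $\ell$ are distinct, while parts in $(\ell,2\ell]$ are unrestricted; - the parts larger than $2\ell$ are at most $k-1$ distinct even parts in $[2\ell+2,2\ell+2k-2]$, their number being even (resp. odd). Thus a partition is counted once per admissible $\ell$. $D_j(n)$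 counts partitions of $n$ into non-negative parts (part $0$ allowed) in which the smallest part appears exactly $j$ times and no other part repeats, with $D_j(0)=1$. Its generating function is $\sum_n D_j(n)q^n=\sum_{m\ge0}q^{mj}(-q^{m+1};q)_\infty$. *)

theory Defs
  imports Complex_Main "HOL-Library.Multiset"
begin

definition parts_pos :: "nat multiset \<Rightarrow> bool" where
  "parts_pos p \<longleftrightarrow> (\<forall>x\<in>#p. x > 0)"

definition distinct_parts :: "nat multiset \<Rightarrow> bool" where
  "distinct_parts p \<longleftrightarrow> (\<forall>x. count p x \<le> 1)"

definition P1 :: "nat \<Rightarrow> nat" where
  "P1 n = card {p. parts_pos p \<and> sum_mset p = n \<and> distinct_parts p \<and> (\<forall>x\<in>#p. x > 1)}"

definition P2 :: "nat \<Rightarrow> nat" where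
  "P2 n = card {p. parts_pos p \<and> sum_mset p = n \<and> distinct_parts p \<and>
     (\<forall>x\<in>#p. x \<noteq> Min (set_mset p) \<longrightarrow> x \<ge> Min (set_mset p) + 2)}"

definition Pprime :: "nat \<Rightarrow> nat \<Rightarrow> nat" where
  "Pprime m n = card {p. parts_pos p \<and> sum_mset p = n \<and> count p 1 = m \<and>
     Min (set_mset p) = 1 \<and> (\<forall>x. x \<noteq> 1 \<longrightarrow> count p x \<le> 1)}"

definition Pdprime :: "nat \<Rightarrow> nat \<Rightarrow> nat" where
  "Pdprime m n = card {p. parts_pos p \<and> sum_mset p = n \<and>
     (\<exists>s. count p s = 1 \<and> count p (s + 1) = m \<and> (\<forall>x\<in>#p. s \<le> x) \<and>
          (\<forall>x. x \<noteq> s + 1 \<longrightarrow> count p x \<le> 1))}"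

definition A :: "nat \<Rightarrow> nat \<Rightarrow> real" where
  "A j n = (real (P1 n) + real (Pprime (j - 1) n) + real (P2 n) + real (Pdprime (j - 1) n)) / 2"

text \<open>B_k(n) with parity flag e (True = even number of even parts).
  The largest odd part is L = 2l-1, so the interval [2l+2, 2l+2k-2] is [L+3, L+2k-1].\<close>
definition Bset :: "bool \<Rightarrow> nat \<Rightarrow> nat \<Rightarrow> nat multiset set" where
  "Bset e k n = {p. parts_pos p \<and> sum_mset p = n \<and> (\<exists>x\<in>#p. odd x) \<and>
     (let L = Max {x \<in> set_mset p. odd x} in
        \<forall>x\<in>#p. even x \<longrightarrow> L + 3 \<le> x \<and> x \<le> L + 2 * k - 1 \<and> count p x = 1) \<and>
     even (size (filter_mset even p)) = e}"

definition Be :: "nat \<Rightarrow> nat \<Rightarrow> nat" where "Be k n = card (Bset True k n)"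
definition Bo :: "nat \<Rightarrow> nat \<Rightarrow> nat" where "Bo k n = card (Bset False k n)"

definition Cset :: "bool \<Rightarrow> nat \<Rightarrow> nat \<Rightarrow> (nat multiset \<times> nat) set" where
  "Cset e k n = {(p, l). l \<ge> 1 \<and> parts_pos p \<and> sum_mset p = n \<and> 2 * l \<in># p \<and>
     (\<forall>x. x \<le> l \<longrightarrow> count p x \<le> 1) \<and>
     (\<forall>x\<in>#p. x > 2 * l \<longrightarrow> even x \<and> 2 * l + 2 \<le> x \<and> x \<le> 2 * l + 2 * k - 2 \<and> count p x = 1) \<and>
     even (size (filter_mset (\<lambda>x. x > 2 * l) p)) = e}"

definition Ce :: "nat \<Rightarrow> nat \<Rightarrow> nat" where "Ce k n = card (Cset True k n)"
definition Co :: "nat \<Rightarrow> nat \<Rightarrow> nat" where "Co k n = card (Cset False k n)"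

text \<open>D_j(n): partitions into non-negative parts (0 allowed), smallest part appearing
  exactly j times, no other part repeated.\<close>
definition D :: "nat \<Rightarrow> nat \<Rightarrow> nat" where
  "D j n = card {p :: nat multiset. p \<noteq> {#} \<and> sum_mset p = n \<and>
     count p (Min (set_mset p)) = j \<and>
     (\<forall>x. x \<noteq> Min (set_mset p) \<longrightarrow> count p x \<le> 1)}"

end

theory Submission
  imports Defs "HOL-Computational_Algebra.Formal_Power_Series"
begin

unbundle fps_syntax

section \<open>Generating functions of partitions with restricted multiplicities\<close>

lemma member_le_sum_mset: "x \<in># p \<Longrightarrow> x \<le> sum_mset (p :: nat multiset)"
  by (metis le_add1 multi_member_split sum_mset.add_mset)

definition restricted_partitions :: "nat set \<Rightarrow> (nat \<Rightarrow> nat set) \<Rightarrow> nat \<Rightarrow> nat multiset set" where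
  "restricted_partitions V M n =
     {p. set_mset p \<subseteq> V \<and> (\<forall>i\<in>V. count p i \<in> M i) \<and> sum_mset p = n}"

definition multiplicity_series :: "nat set \<Rightarrow> 'a::comm_semiring_1 \<Rightarrow> nat \<Rightarrow> 'a fps" where
  "multiplicity_series S c i = Abs_fps (\<lambda>n. if i dvd n \<and> n div i \<in> S then c ^ (n div i) else 0)"

lemma restricted_partitions_empty: "restricted_partitions {} M n = (if n = 0 then {{#}} else {})"
  by (auto simp: restricted_partitions_def)

lemma restricted_partitions_insert:
  assumes "i \<notin> V"
  shows "restricted_partitions (insert i V) M n = (\<lambda>(c, q). replicate_mset c i + q) `
           (SIGMA c:{c \<in> M i. i * c \<le> n}. restricted_partitions V M (n - i * c))"
proof (intro set_eqI iffI)
  fix p assume p: "p \<in> restricted_partitions (insert i V) M n"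
  define q where "q = filter_mset (\<lambda>x. x \<noteq> i) p"
  have p_eq: "p = replicate_mset (count p i) i + q"
    unfolding q_def using multiset_partition[of p "\<lambda>x. x = i"] by (simp add: filter_eq_replicate_mset)
  have "sum_mset p = i * count p i + sum_mset q"
    using arg_cong[OF p_eq, of sum_mset] by simp
  moreover have "set_mset q \<subseteq> V" "\<forall>j\<in>V. count q j \<in> M j"
    using p assms by (auto simp: restricted_partitions_def q_def)
  ultimately have "q \<in> restricted_partitions V M (n - i * count p i)" "i * count p i \<le> n"
    using p by (auto simp: restricted_partitions_def)
  with p p_eq show "p \<in> (\<lambda>(c, q). replicate_mset c i + q) `
           (SIGMA c:{c \<in> M i. i * c \<le> n}. restricted_partitions V M (n - i * c))"
    by (auto simp: restricted_partitions_def intro!: image_eqI[of _ _ "(count p i, q)"])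
next
  fix p assume "p \<in> (\<lambda>(c, q). replicate_mset c i + q) `
           (SIGMA c:{c \<in> M i. i * c \<le> n}. restricted_partitions V M (n - i * c))"
  then obtain c q where "p = replicate_mset c i + q" "c \<in> M i" "i * c \<le> n"
    and "q \<in> restricted_partitions V M (n - i * c)" by auto
  moreover from this(4) assms have "count q i = 0"
    by (auto simp: restricted_partitions_def count_eq_zero_iff)
  ultimately show "p \<in> restricted_partitions (insert i V) M n"
    by (auto simp: restricted_partitions_def)
qed

lemma multiplicity_series_mult_nth:
  assumes "i > 0"
  shows "(multiplicity_series S c i * f) $ n = (\<Sum>m\<in>{m \<in> S. i * m \<le> n}. c ^ m * f $ (n - i * m))"
proof -
  have "(multiplicity_series S c i * f) $ n =
      (\<Sum>j\<in>{j \<in> {0..n}. i dvd j \<and> j div i \<in> S}. c ^ (j div i) * f $ (n - j))"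
    unfolding fps_mult_nth sum.inter_filter[OF finite_atLeastAtMost]
    by (rule sum.cong) (simp_all add: multiplicity_series_def)
  also have "{j \<in> {0..n}. i dvd j \<and> j div i \<in> S} = (\<lambda>m. i * m) ` {m \<in> S. i * m \<le> n}"
    using assms by (auto simp: image_iff)
  also have "(\<Sum>j\<in>(\<lambda>m. i * m) ` {m \<in> S. i * m \<le> n}. c ^ (j div i) * f $ (n - j)) =
      (\<Sum>m\<in>{m \<in> S. i * m \<le> n}. c ^ m * f $ (n - i * m))"
    using assms by (subst sum.reindex) (auto simp: inj_on_def)
  finally show ?thesis .
qed

lemma finite_multiples_le: "0 < (i :: nat) \<Longrightarrow> finite {c. i * c \<le> n}"
  by (rule finite_subset[of _ "{..n}"]) (auto intro: order.trans[rotated])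

lemma finite_restricted_partitions:
  assumes "finite V" "0 \<notin> V"
  shows "finite (restricted_partitions V M n)"
  using assms
proof (induction V arbitrary: n)
  case (insert i V)
  have "i > 0" using insert.prems by auto
  then have "finite {c. i * c \<le> n}" by (rule finite_multiples_le)
  then have "finite (SIGMA c:{c \<in> M i. i * c \<le> n}. restricted_partitions V M (n - i * c))"
    using insert by (intro finite_SigmaI) (auto intro: finite_subset[rotated])
  then show ?case
    using insert.hyps by (simp add: restricted_partitions_insert)
qed (simp add: restricted_partitions_empty)

lemma restricted_partitions_gf:
  fixes \<sigma> :: "nat \<Rightarrow> 'a::comm_semiring_1"
  assumes "finite V" "0 \<notin> V"
  shows "(\<Sum>p\<in>restricted_partitions V M n. \<Prod>x\<in>#p. \<sigma> x) =
    (\<Prod>i\<in>V. multiplicity_series (M i) (\<sigma> i) i) $ n"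
  using assms
proof (induction V arbitrary: n)
  case empty
  then show ?case by (simp add: restricted_partitions_empty)
next
  case (insert i V)
  let ?C = "{c \<in> M i. i * c \<le> n}"
  have "i > 0" using insert.prems by auto
  have "finite ?C"
    using finite_multiples_le[OF \<open>i > 0\<close>] by (rule finite_subset[rotated]) auto
  have inj: "inj_on (\<lambda>(c, q). replicate_mset c i + q)
      (SIGMA c:?C. restricted_partitions V M (n - i * c))"
  proof (rule inj_onI, clarify)
    fix c q c' q'
    assume "q \<in> restricted_partitions V M (n - i * c)" "q' \<in> restricted_partitions V M (n - i * c')"
      and eq: "replicate_mset c i + q = replicate_mset c' i + q'"
    then have "count q i = 0" "count q' i = 0"
      using insert.hyps by (auto simp: restricted_partitions_def count_eq_zero_iff)
    with arg_cong[OF eq, of "\<lambda>p. count p i"] have "c = c'" by simp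
    with eq show "c = c' \<and> q = q'" by simp
  qed
  have "(\<Sum>p\<in>restricted_partitions (insert i V) M n. \<Prod>x\<in>#p. \<sigma> x) =
      (\<Sum>(c, q)\<in>(SIGMA c:?C. restricted_partitions V M (n - i * c)). \<Prod>x\<in>#replicate_mset c i + q. \<sigma> x)"
    unfolding restricted_partitions_insert[OF insert.hyps(2)] sum.reindex[OF inj]
    by (simp add: comp_def case_prod_unfold)
  also have "\<dots> = (\<Sum>c\<in>?C. \<Sum>q\<in>restricted_partitions V M (n - i * c). \<sigma> i ^ c * (\<Prod>x\<in>#q. \<sigma> x))"
    using \<open>finite ?C\<close> insert by (subst sum.Sigma) (auto simp: finite_restricted_partitions)
  also have "\<dots> = (\<Sum>c\<in>?C. \<sigma> i ^ c * (\<Prod>j\<in>V. multiplicity_series (M j) (\<sigma> j) j) $ (n - i * c))"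
    using insert by (simp add: sum_distrib_left[symmetric])
  also have "\<dots> = (\<Prod>j\<in>insert i V. multiplicity_series (M j) (\<sigma> j) j) $ n"
    using insert.hyps \<open>i > 0\<close> by (simp add: multiplicity_series_mult_nth)
  finally show ?case .
qed

lemma card_restricted_partitions:
  assumes "finite V" "0 \<notin> V"
  shows "of_nat (card (restricted_partitions V M n)) =
    (\<Prod>i\<in>V. multiplicity_series (M i) (1 :: 'a::comm_semiring_1) i) $ n"
  using restricted_partitions_gf[OF assms, of "\<lambda>_. 1 :: 'a" M n] by simp

lemma multiplicity_series_0_1:
  "i > 0 \<Longrightarrow> multiplicity_series {0, 1} c i = 1 + fps_const c * fps_X ^ i"
  by (rule fps_ext) (auto simp: multiplicity_series_def)

lemma multiplicity_series_singleton:
  "i > 0 \<Longrightarrow> multiplicity_series {m} 1 i = fps_X ^ (i * m)"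
  by (rule fps_ext) (auto simp: multiplicity_series_def)

lemma multiplicity_series_UNIV:
  fixes i :: nat
  assumes "i > 0"
  shows "multiplicity_series UNIV (1 :: 'a::field) i = inverse (1 - fps_X ^ i)"
proof (rule fps_inverse_unique[symmetric], rule fps_ext)
  fix n
  let ?g = "multiplicity_series UNIV (1 :: 'a) i"
  have "((1 - fps_X ^ i) * ?g) $ n = ?g $ n - (if n < i then 0 else ?g $ (n - i))"
    by (simp add: algebra_simps fps_X_power_mult_nth)
  also have "\<dots> = (1 :: 'a fps) $ n"
  proof (cases "n < i")
    case True
    then have "i dvd n \<longleftrightarrow> n = 0" using assms by auto
    with True show ?thesis by (simp add: multiplicity_series_def)
  next
    case False
    then have "i dvd n - i \<longleftrightarrow> i dvd n" by (simp add: dvd_minus_self)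
    with False assms show ?thesis by (simp add: multiplicity_series_def)
  qed
  finally show "((1 - fps_X ^ i) * ?g) $ n = (1 :: 'a fps) $ n" .
qed

lemma multiplicity_series_positive:
  fixes i :: nat
  assumes "i > 0"
  shows "multiplicity_series {m. m \<ge> 1} (1 :: 'a::field) i = fps_X ^ i * inverse (1 - fps_X ^ i)"
proof (rule fps_ext)
  fix n
  show "multiplicity_series {m. m \<ge> 1} (1 :: 'a) i $ n = (fps_X ^ i * inverse (1 - fps_X ^ i)) $ n"
  proof (cases "n < i")
    case False
    have "(fps_X ^ i * inverse (1 - fps_X ^ i)) $ n = (if i dvd n - i then 1 else (0 :: 'a))"
      using False assms
      by (simp add: multiplicity_series_UNIV[symmetric] fps_X_power_mult_nth multiplicity_series_def)
    moreover have "i dvd n - i \<longleftrightarrow> i dvd n"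
      using False by (simp add: dvd_minus_self)
    moreover have "n div i \<ge> 1" using False assms by (simp add: Suc_le_eq div_greater_zero_iff)
    ultimately show ?thesis by (simp add: multiplicity_series_def)
  next
    case True
    then have "n div i = 0" by simp
    with True assms show ?thesis
      by (simp add: multiplicity_series_UNIV[symmetric] multiplicity_series_def fps_X_power_mult_nth)
  qed
qed

lemma restricted_partitions_iff:
  "p \<in> restricted_partitions V M n \<longleftrightarrow>
     sum_mset p = n \<and> (\<forall>x. count p x \<in> (if x \<in> V then M x else {0}))"
  by (auto simp: restricted_partitions_def count_eq_zero_iff)

lemma restricted_partitions_count:
  "p \<in> restricted_partitions V M n \<Longrightarrow> count p x \<in> (if x \<in> V then M x else {0})"
  by (simp add: restricted_partitions_iff)

lemma Min_set_mset_eqI: "m \<in># p \<Longrightarrow> (\<And>x. x \<in># p \<Longrightarrow> m \<le> x) \<Longrightarrow> Min (set_mset p) = m"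
  by (rule Min_eqI) auto

lemma finite_if_finite_fibers:
  assumes "g ` S \<subseteq> T" "finite T" "\<And>y. y \<in> T \<Longrightarrow> finite {x \<in> S. g x = y}"
  shows "finite S"
proof -
  have "finite (\<Union>y\<in>T. {x \<in> S. g x = y})" using assms(2,3) by blast
  moreover have "S = (\<Union>y\<in>T. {x \<in> S. g x = y})" using assms(1) by auto
  ultimately show ?thesis by simp
qed

lemma sum_by_fibers:
  assumes "g ` S \<subseteq> T" "finite T" "\<And>y. y \<in> T \<Longrightarrow> finite {x \<in> S. g x = y}"
  shows "sum h S = (\<Sum>y\<in>T. sum h {x \<in> S. g x = y})"
  using assms finite_if_finite_fibers[OF assms] by (intro sum.group[symmetric]) auto

lemma card_filter_diff_eq_sum_sign:
  assumes "finite S"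
  shows "real (card {x \<in> S. P x}) - real (card {x \<in> S. \<not> P x}) = (\<Sum>x\<in>S. if P x then 1 else -1)"
  using assms by (simp add: sum.If_cases Int_def conj_commute)

lemma prod_mset_sign:
  "(\<Prod>x\<in>#p. if P x then -1 else 1 :: 'a::comm_ring_1) = (-1) ^ size (filter_mset P p)"
  by (induction p) auto


section \<open>Truncated power series\<close>

lemma fps_nth_eq_if_X_power_dvd_diff:
  fixes f g :: "'a::comm_ring_1 fps"
  assumes "fps_X ^ M dvd f - g" "i < M"
  shows "f $ i = g $ i"
proof -
  from assms(1) obtain h where "f - g = fps_X ^ M * h" by (elim dvdE)
  then have "(f - g) $ i = 0" using assms(2) by (simp add: fps_X_power_mult_nth)
  then show ?thesis by simp
qed

definition fps_degree_le :: "nat \<Rightarrow> 'a::zero fps \<Rightarrow> bool" where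
  "fps_degree_le d f \<longleftrightarrow> (\<forall>i>d. f $ i = 0)"

lemma fps_degree_le_mono: "fps_degree_le d f \<Longrightarrow> d \<le> d' \<Longrightarrow> fps_degree_le d' f"
  by (simp add: fps_degree_le_def)

lemma fps_degree_le_add:
  fixes f g :: "'a::comm_ring_1 fps"
  shows "fps_degree_le d f \<Longrightarrow> fps_degree_le d g \<Longrightarrow> fps_degree_le d (f + g)"
  by (simp add: fps_degree_le_def)

lemma fps_degree_le_diff:
  fixes f g :: "'a::comm_ring_1 fps"
  shows "fps_degree_le d f \<Longrightarrow> fps_degree_le d g \<Longrightarrow> fps_degree_le d (f - g)"
  by (simp add: fps_degree_le_def)

lemma fps_degree_le_1: "fps_degree_le d 1"
  by (simp add: fps_degree_le_def)

lemma fps_degree_le_numeral: "fps_degree_le d (numeral n)"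
  by (simp add: fps_degree_le_def numeral_fps_const)

lemma fps_degree_le_X_power: "m \<le> d \<Longrightarrow> fps_degree_le d (fps_X ^ m)"
  by (simp add: fps_degree_le_def)

lemma fps_degree_le_mult:
  fixes f g :: "'a::comm_ring_1 fps"
  assumes "fps_degree_le a f" "fps_degree_le b g"
  shows "fps_degree_le (a + b) (f * g)"
  unfolding fps_degree_le_def fps_mult_nth
proof (intro allI impI sum.neutral ballI)
  fix i j assume "a + b < i" "j \<in> {0..i}"
  then have "a < j \<or> b < i - j" by auto
  then show "f $ j * g $ (i - j) = 0"
    using assms by (auto simp: fps_degree_le_def)
qed

section \<open>The q-series identity\<close>

definition odd_part_gf :: "nat \<Rightarrow> 'a::field fps" where
  "odd_part_gf l = (\<Prod>i=1..l. inverse (1 - fps_X ^ (2 * i - 1)))"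

definition distinct_part_gf :: "nat \<Rightarrow> nat \<Rightarrow> 'a::comm_ring_1 fps" where
  "distinct_part_gf N m = (\<Prod>i=Suc m..N. 1 + fps_X ^ i)"

definition D_series :: "nat \<Rightarrow> nat \<Rightarrow> 'a::comm_ring_1 fps" where
  "D_series N s = (\<Sum>m=0..N. fps_X ^ (s * m) * distinct_part_gf N m)"

definition even_gap_gf :: "nat \<Rightarrow> nat \<Rightarrow> 'a::comm_ring_1 fps" where
  "even_gap_gf b l = (\<Prod>i=1..b. 1 - fps_X ^ (2 * l + 2 * i))"

definition largest_odd_sum :: "nat \<Rightarrow> (nat \<Rightarrow> 'a::field fps) \<Rightarrow> 'a fps" where
  "largest_odd_sum N f = (\<Sum>l=1..N. fps_X ^ (2 * l - 1) * odd_part_gf l * f l)"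

definition B_series :: "nat \<Rightarrow> nat \<Rightarrow> nat \<Rightarrow> 'a::field fps" where
  "B_series N j b = largest_odd_sum N (\<lambda>l. fps_X ^ (2 * j * l) * even_gap_gf b l)"

lemma inverse_one_minus_X_power_mult:
  "m > 0 \<Longrightarrow> inverse (1 - fps_X ^ m :: 'a::field fps) * (1 - fps_X ^ m) = 1"
  by (rule inverse_mult_eq_1) simp

lemma odd_part_gf_telescope:
  "fps_X ^ (2 * l + 1) * odd_part_gf (Suc l) = odd_part_gf (Suc l) - (odd_part_gf l :: 'a::field fps)"
proof -
  have "odd_part_gf (Suc l) * (1 - fps_X ^ (2 * l + 1)) = (odd_part_gf l :: 'a fps)"
    using inverse_one_minus_X_power_mult[of "2 * l + 1", where 'a = 'a]
    by (simp add: odd_part_gf_def mult.assoc)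
  then show ?thesis by (simp add: algebra_simps)
qed

lemma largest_odd_sum_Suc:
  "largest_odd_sum (Suc N) f = largest_odd_sum N f + fps_X ^ (2 * N + 1) * odd_part_gf (Suc N) * f (Suc N)"
  by (simp add: largest_odd_sum_def)

lemma largest_odd_sum_mult:
  "largest_odd_sum N (\<lambda>l. c * f l) = c * largest_odd_sum N f"
  by (simp add: largest_odd_sum_def sum_distrib_left algebra_simps)

lemma largest_odd_sum_diff_mult:
  "largest_odd_sum N (\<lambda>l. f l - c * g l) = largest_odd_sum N f - c * largest_odd_sum N g"
  by (simp add: largest_odd_sum_def sum_distrib_left sum_subtractf algebra_simps)

lemma largest_odd_sum_one: "largest_odd_sum N (\<lambda>_. 1) = odd_part_gf N - 1"
proof (induction N)
  case (Suc N)
  then show ?case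
    unfolding largest_odd_sum_Suc Suc.IH mult_1_right odd_part_gf_telescope by simp
qed (simp add: largest_odd_sum_def odd_part_gf_def)

lemma largest_odd_sum_shift:
  "largest_odd_sum N (\<lambda>l. fps_X ^ (2 * l) * f l) =
     fps_X * largest_odd_sum N f - fps_X ^ 3 * largest_odd_sum N (\<lambda>l. f (Suc l))
       - fps_X ^ 2 * f 1 + fps_X ^ (2 * N + 2) * odd_part_gf N * f (Suc N)"
proof (induction N)
  case 0
  then show ?case by (simp add: largest_odd_sum_def odd_part_gf_def power2_eq_square)
next
  case (Suc N)
  define y :: "'a fps" where "y = fps_X ^ (2 * N + 1)"
  have pw: "fps_X ^ (2 * Suc N) = y * fps_X" "fps_X ^ (2 * N + 2) = y * fps_X"
    "fps_X ^ (2 * Suc N + 2) = y * fps_X ^ 3"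
    unfolding y_def power_add[symmetric] power_Suc2[symmetric] by (rule arg_cong[where f = "(^) fps_X"]; simp)+
  have "y * odd_part_gf (Suc N) = odd_part_gf (Suc N) - odd_part_gf N"
    unfolding y_def by (rule odd_part_gf_telescope)
  with Suc.IH[unfolded pw(2)] show ?case
    unfolding largest_odd_sum_Suc pw y_def[symmetric] by algebra
qed

lemma even_gap_gf_Suc:
  "even_gap_gf (Suc b) l = even_gap_gf b l * (1 - fps_X ^ (2 * b + 2) * fps_X ^ (2 * l))"
  by (simp add: even_gap_gf_def ac_simps flip: power_add)

lemma even_gap_gf_Suc_shift:
  "even_gap_gf (Suc b) l = (1 - fps_X ^ 2 * fps_X ^ (2 * l)) * even_gap_gf b (Suc l)"
proof -
  have "even_gap_gf (Suc b) l = (1 - fps_X ^ (2 * l + 2)) * (\<Prod>i=Suc 1..Suc b. 1 - fps_X ^ (2 * l + 2 * i))"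
    by (simp add: even_gap_gf_def prod.atLeast_Suc_atMost)
  also have "(\<Prod>i=Suc 1..Suc b. 1 - fps_X ^ (2 * l + 2 * i)) = even_gap_gf b (Suc l)"
    by (simp only: prod.shift_bounds_cl_Suc_ivl even_gap_gf_def) (simp add: algebra_simps)
  finally show ?thesis by (simp add: power_add[symmetric] add.commute)
qed

lemma B_series_Suc:
  "B_series N j (Suc b) = B_series N j b - fps_X ^ (2 * b + 2) * B_series N (Suc j) b"
proof -
  have eq: "(\<lambda>l. fps_X ^ (2 * j * l) * even_gap_gf (Suc b) l) = (\<lambda>l. fps_X ^ (2 * j * l) * even_gap_gf b l
      - fps_X ^ (2 * b + 2) * (fps_X ^ (2 * Suc j * l) * even_gap_gf b l))"
    by (simp add: fun_eq_iff even_gap_gf_Suc algebra_simps power_add[symmetric])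
  show ?thesis unfolding B_series_def eq largest_odd_sum_diff_mult ..
qed

lemma largest_odd_sum_shift_cong:
  "fps_X ^ (2 * N + 2) dvd largest_odd_sum N (\<lambda>l. fps_X ^ (2 * l) * f l) -
     (fps_X * largest_odd_sum N f - fps_X ^ 3 * largest_odd_sum N (\<lambda>l. f (Suc l)) - fps_X ^ 2 * f 1)"
  unfolding largest_odd_sum_shift by (simp add: mult.assoc)

lemma B_series_1_shift_cong:
  "fps_X ^ (2 * N + 2) dvd B_series N 1 b -
     (fps_X * B_series N 0 b - fps_X ^ 3 * largest_odd_sum N (\<lambda>l. even_gap_gf b (Suc l))
       - fps_X ^ 2 * even_gap_gf b 1)"
  using largest_odd_sum_shift_cong[of N "even_gap_gf b"] by (simp add: B_series_def)

lemma B_series_2_cong: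
  "fps_X ^ (2 * N + 2) dvd B_series N 2 b -
     ((1 + fps_X) * B_series N 1 b - fps_X * B_series N 0 b + fps_X ^ 3 * B_series N 0 (Suc b)
       + (fps_X ^ 2 - fps_X ^ 4) * even_gap_gf b 1)"
proof -
  define S :: "'a fps" where "S = largest_odd_sum N (\<lambda>l. even_gap_gf b (Suc l))"
  define W :: "'a fps" where "W = largest_odd_sum N (\<lambda>l. fps_X ^ (2 * l) * even_gap_gf b (Suc l))"
  have B1: "B_series N 1 b = largest_odd_sum N (\<lambda>l. fps_X ^ (2 * l) * even_gap_gf b l)"
    by (simp add: B_series_def)
  have e2: "(\<lambda>l. fps_X ^ (2 * 2 * l) * even_gap_gf b l) =
      (\<lambda>l. fps_X ^ (2 * l) * (fps_X ^ (2 * l) * even_gap_gf b l))"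
    by (simp add: fun_eq_iff mult.assoc[symmetric] flip: power_add)
  have B2: "B_series N 2 b = largest_odd_sum N (\<lambda>l. fps_X ^ (2 * l) * (fps_X ^ (2 * l) * even_gap_gf b l))"
    unfolding B_series_def e2 ..
  have e3: "(\<lambda>l. fps_X ^ (2 * Suc l) * even_gap_gf b (Suc l)) =
      (\<lambda>l. fps_X ^ 2 * (fps_X ^ (2 * l) * even_gap_gf b (Suc l)))"
    by (simp add: fun_eq_iff mult.assoc[symmetric] flip: power_add)
  have W2: "largest_odd_sum N (\<lambda>l. fps_X ^ (2 * Suc l) * even_gap_gf b (Suc l)) = fps_X ^ 2 * W"
    unfolding e3 W_def largest_odd_sum_mult ..
  have R2: "fps_X ^ (2 * N + 2) dvd B_series N 2 b -
      (fps_X * B_series N 1 b - fps_X ^ 3 * (fps_X ^ 2 * W) - fps_X ^ 2 * (fps_X ^ (2 * 1) * even_gap_gf b 1))"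
    using largest_odd_sum_shift_cong[of N "\<lambda>l. fps_X ^ (2 * l) * (even_gap_gf b l :: 'a fps)"]
    unfolding B1 B2 W2 .
  have e4: "(\<lambda>l. fps_X ^ (2 * 0 * l) * even_gap_gf (Suc b) l) =
      (\<lambda>l. even_gap_gf b (Suc l) - fps_X ^ 2 * (fps_X ^ (2 * l) * even_gap_gf b (Suc l)))"
    by (simp add: fun_eq_iff even_gap_gf_Suc_shift algebra_simps)
  have B0_Suc: "B_series N 0 (Suc b) = S - fps_X ^ 2 * W"
    unfolding B_series_def S_def W_def e4 largest_odd_sum_diff_mult ..
  have "B_series N 2 b -
     ((1 + fps_X) * B_series N 1 b - fps_X * B_series N 0 b + fps_X ^ 3 * B_series N 0 (Suc b)
       + (fps_X ^ 2 - fps_X ^ 4) * even_gap_gf b 1) =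
     (B_series N 2 b - (fps_X * B_series N 1 b - fps_X ^ 3 * (fps_X ^ 2 * W)
       - fps_X ^ 2 * (fps_X ^ (2 * 1) * even_gap_gf b 1)))
     - (B_series N 1 b - (fps_X * B_series N 0 b - fps_X ^ 3 * S - fps_X ^ 2 * even_gap_gf b 1))"
    unfolding B0_Suc mult_1_right by algebra
  with R2 B_series_1_shift_cong[of N b] show ?thesis
    unfolding S_def by (metis dvd_diff)
qed

lemma fps_degree_le_even_gap_gf: "fps_degree_le (2 * l * b + b * b + b) (even_gap_gf b l)"
proof (induction b)
  case 0
  show ?case by (simp add: even_gap_gf_def fps_degree_le_def)
next
  case (Suc b)
  have "fps_degree_le (2 * l * b + b * b + b + (2 * b + 2 + 2 * l))
      (even_gap_gf b l * (1 - fps_X ^ (2 * b + 2 + 2 * l)) :: 'a fps)"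
    by (intro fps_degree_le_mult[OF Suc.IH] fps_degree_le_diff fps_degree_le_1 fps_degree_le_X_power)
      simp
  then show ?case
    unfolding even_gap_gf_Suc power_add[symmetric] by (rule fps_degree_le_mono) (simp add: algebra_simps)
qed

lemma B_series_1_cong_0:
  "fps_X ^ (2 * N + 2) dvd
     (1 + fps_X - fps_X ^ 3) * B_series N 0 0 - B_series N 1 0 - (B_series N 0 0 + fps_X ^ 2 :: 'a::field fps)"
proof -
  have S0: "largest_odd_sum N (\<lambda>l. even_gap_gf 0 (Suc l)) = (B_series N 0 0 :: 'a fps)"
    by (simp add: B_series_def even_gap_gf_def)
  have R1: "fps_X ^ (2 * N + 2) dvd B_series N 1 0 -
      (fps_X * B_series N 0 0 - fps_X ^ 3 * B_series N 0 0 - fps_X ^ 2 * (1 :: 'a fps))"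
    using B_series_1_shift_cong[of N 0, where 'a = 'a] unfolding S0 by (simp add: even_gap_gf_def)
  have eq: "(1 + fps_X - fps_X ^ 3) * B_series N 0 0 - B_series N 1 0 - (B_series N 0 0 + fps_X ^ 2) =
      - (B_series N 1 0 - (fps_X * B_series N 0 0 - fps_X ^ 3 * B_series N 0 0 - fps_X ^ 2 * (1 :: 'a fps)))"
    by algebra
  show ?thesis
    unfolding eq dvd_minus_iff by (rule R1)
qed

lemma B_series_1_cong:
  "\<exists>h. fps_degree_le (b * b + 3 * b + 2) h \<and>
     fps_X ^ (2 * N + 2) dvd
       (1 + fps_X - fps_X ^ (2 * b + 3)) * B_series N 0 b - B_series N 1 b - (B_series N 0 0 + h)"
proof (induction b)
  case 0
  show ?case
    using B_series_1_cong_0 by (intro exI[of _ "fps_X ^ 2"]) (simp add: fps_degree_le_X_power)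
next
  case (Suc b)
  then obtain h :: "'a fps" where h_deg: "fps_degree_le (b * b + 3 * b + 2) h"
    and h_cong: "fps_X ^ (2 * N + 2) dvd
       (1 + fps_X - fps_X ^ (2 * b + 3)) * B_series N 0 b - B_series N 1 b - (B_series N 0 0 + h)"
    by blast
  define y :: "'a fps" where "y = fps_X ^ (2 * b + 2)"
  define h' where "h' = h + fps_X ^ (2 * b + 4) * (1 - fps_X ^ 2) * even_gap_gf b 1"
  have pw: "fps_X ^ (2 * b + 3) = y * fps_X" "fps_X ^ (2 * Suc b + 3) = y * fps_X ^ 3"
    "fps_X ^ (2 * b + 4) = y * fps_X ^ 2"
    unfolding y_def power_add[symmetric] power_Suc2[symmetric] by (rule arg_cong[where f = "(^) fps_X"]; simp)+
  have "fps_degree_le ((2 * b + 4) + 2 + (2 * 1 * b + b * b + b)) (fps_X ^ (2 * b + 4) * (1 - fps_X ^ 2) * even_gap_gf b 1)"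
    by (intro fps_degree_le_mult fps_degree_le_even_gap_gf fps_degree_le_diff fps_degree_le_1
        fps_degree_le_X_power) simp_all
  with h_deg have "fps_degree_le (Suc b * Suc b + 3 * Suc b + 2) h'"
    unfolding h'_def by (intro fps_degree_le_add) (erule fps_degree_le_mono; simp)+
  moreover have "(1 + fps_X - fps_X ^ (2 * Suc b + 3)) * B_series N 0 (Suc b) - B_series N 1 (Suc b)
        - (B_series N 0 0 + h') =
      y * (B_series N 2 b - ((1 + fps_X) * B_series N 1 b - fps_X * B_series N 0 b
        + fps_X ^ 3 * B_series N 0 (Suc b) + (fps_X ^ 2 - fps_X ^ 4) * even_gap_gf b 1))
      + ((1 + fps_X - fps_X ^ (2 * b + 3)) * B_series N 0 b - B_series N 1 b - (B_series N 0 0 + h))"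
    unfolding h'_def pw B_series_Suc[of N 0 b] B_series_Suc[of N 1 b] Suc_1 One_nat_def[symmetric]
      y_def[symmetric]
    by algebra
  ultimately show ?case
    using B_series_2_cong[of N b] h_cong by (metis dvd_add dvd_mult)
qed

lemma distinct_part_gf_rec:
  "m < N \<Longrightarrow> distinct_part_gf N m = (1 + fps_X ^ Suc m) * distinct_part_gf N (Suc m)"
  unfolding distinct_part_gf_def by (subst prod.atLeast_Suc_atMost) auto

lemma D_series_Suc:
  "D_series N (Suc s) = (fps_X ^ s - 1) * D_series N s + 2 * distinct_part_gf N 0 - fps_X ^ (s * Suc N)"
proof (cases N)
  case 0
  then show ?thesis by (simp add: D_series_def distinct_part_gf_def)
next
  case (Suc n)
  let ?E = "distinct_part_gf N :: nat \<Rightarrow> 'a fps"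
  have shifted: "fps_X ^ s * D_series N s = (\<Sum>m=0..n. fps_X ^ (s * Suc m) * ?E m) + fps_X ^ (s * Suc N)"
  proof -
    have "fps_X ^ s * D_series N s = (\<Sum>m=0..Suc n. fps_X ^ (s * Suc m) * ?E m)"
      unfolding D_series_def Suc sum_distrib_left by (simp add: power_add mult.assoc)
    also have "\<dots> = (\<Sum>m=0..n. fps_X ^ (s * Suc m) * ?E m) + fps_X ^ (s * Suc N)"
      using Suc by (simp add: distinct_part_gf_def)
    finally show ?thesis .
  qed
  have "D_series N s + D_series N (Suc s) = (\<Sum>m=0..Suc n. fps_X ^ (s * m) * ((1 + fps_X ^ m) * ?E m))"
    by (simp add: D_series_def Suc sum.distrib[symmetric] algebra_simps power_add)
  also have "\<dots> = 2 * ?E 0 + (\<Sum>m=0..n. fps_X ^ (s * Suc m) * ((1 + fps_X ^ Suc m) * ?E (Suc m)))"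
    by (subst sum.atLeast0_atMost_Suc_shift) simp
  also have "(\<Sum>m=0..n. fps_X ^ (s * Suc m) * ((1 + fps_X ^ Suc m) * ?E (Suc m))) =
      (\<Sum>m=0..n. fps_X ^ (s * Suc m) * ?E m)"
    using Suc by (intro sum.cong refl) (simp add: distinct_part_gf_rec[symmetric] del: power_Suc)
  finally show ?thesis
    using shifted by (simp add: algebra_simps)
qed

lemma distinct_times_odd_prod:
  "(\<Prod>i=1..l. 1 + fps_X ^ i) * (\<Prod>i=1..l. 1 - fps_X ^ (2 * i - 1)) =
     (\<Prod>i=Suc l..2 * l. 1 - fps_X ^ i :: 'a::idom fps)"
proof (induction l)
  case (Suc l)
  define P :: "'a fps" where "P = (\<Prod>i=Suc l..2 * l. 1 - fps_X ^ i)"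
  define a :: "'a fps" where "a = fps_X ^ Suc l"
  define P' :: "'a fps" where "P' = (\<Prod>i=Suc (Suc l)..2 * Suc l. 1 - fps_X ^ i)"
  have "(1 - a) * P' = (\<Prod>i=Suc l..2 * Suc l. 1 - fps_X ^ i)"
    unfolding a_def P'_def by (subst (2) prod.atLeast_Suc_atMost) auto
  also have "\<dots> = P * (1 - fps_X ^ (2 * l + 1)) * (1 - a * a)"
    unfolding P_def a_def by (simp flip: power_add)
  also have "\<dots> = (1 - a) * (P * (1 + a) * (1 - fps_X ^ (2 * l + 1)))"
    by algebra
  finally have "P * (1 + a) * (1 - fps_X ^ (2 * l + 1)) = P'"
    using fps_nonzeroI[of "1 - a" 0] unfolding a_def by simp
  with Suc.IH show ?case
    unfolding P_def P'_def a_def by (simp add: algebra_simps)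
qed simp

lemma X_power_dvd_prod_one_minus_X_power:
  assumes "finite I" "\<forall>i\<in>I. M \<le> i"
  shows "fps_X ^ M dvd (\<Prod>i\<in>I. 1 - fps_X ^ i) - (1 :: 'a::comm_ring_1 fps)"
  using assms
proof (induction I rule: finite_induct)
  case (insert i I)
  have eq: "(\<Prod>j\<in>insert i I. 1 - fps_X ^ j) - 1 =
      ((\<Prod>j\<in>I. 1 - fps_X ^ j) - 1) - fps_X ^ i * (\<Prod>j\<in>I. 1 - fps_X ^ j :: 'a fps)"
    using insert.hyps by (simp add: algebra_simps)
  moreover have "fps_X ^ M dvd (fps_X ^ i :: 'a fps)"
    using insert.prems by (simp add: le_imp_power_dvd)
  ultimately show ?case
    using insert unfolding eq by (intro dvd_diff[OF _ dvd_mult2]) auto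
qed simp

lemma distinct_part_gf_cong_odd_part_gf:
  "fps_X ^ Suc N dvd distinct_part_gf N 0 - (odd_part_gf N :: 'a::field fps)"
proof -
  define Q :: "'a fps" where "Q = (\<Prod>i=1..N. 1 - fps_X ^ (2 * i - 1))"
  have "odd_part_gf N * Q = (\<Prod>i=1..N. inverse (1 - fps_X ^ (2 * i - 1)) * (1 - fps_X ^ (2 * i - 1)))"
    unfolding odd_part_gf_def Q_def by (simp add: prod.distrib)
  also have "\<dots> = 1"
    by (intro prod.neutral ballI inverse_one_minus_X_power_mult) auto
  finally have OQ: "odd_part_gf N * Q = 1" .
  have EQ: "distinct_part_gf N 0 * Q = (\<Prod>i=Suc N..2 * N. 1 - fps_X ^ i)"
    unfolding distinct_part_gf_def Q_def using distinct_times_odd_prod[of N] by simp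
  have "fps_X ^ Suc N dvd (\<Prod>i=Suc N..2 * N. 1 - fps_X ^ i) - (1 :: 'a fps)"
    by (rule X_power_dvd_prod_one_minus_X_power) auto
  then have "fps_X ^ Suc N dvd (distinct_part_gf N 0 * Q - 1) * odd_part_gf N"
    unfolding EQ by (rule dvd_mult2)
  moreover have "(distinct_part_gf N 0 * Q - 1) * odd_part_gf N = distinct_part_gf N 0 - odd_part_gf N"
    using OQ by algebra
  ultimately show ?thesis by simp
qed

lemma B_series_0_0: "B_series N 0 0 = odd_part_gf N - 1"
  by (simp add: B_series_def even_gap_gf_def largest_odd_sum_one)

lemma B_series_cong_D_series_step:
  fixes b N :: nat and R h :: "'a::field fps"
  defines "y \<equiv> fps_X ^ (2 * b + 2) :: 'a fps"
  assumes R_cong: "fps_X ^ Suc N dvd 2 * fps_X * B_series N 0 b - (D_series N (2 * b + 2) - 1 + R)"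
    and h_cong: "fps_X ^ (2 * N + 2) dvd
       (1 + fps_X - fps_X ^ (2 * b + 3)) * B_series N 0 b - B_series N 1 b - (B_series N 0 0 + h)"
  shows "fps_X ^ Suc N dvd 2 * fps_X * B_series N 0 (Suc b) - (D_series N (2 * Suc b + 2) - 1
    + ((1 - y) * (1 - fps_X ^ (2 * b + 3)) * (R - 1) + 2 * fps_X ^ (2 * b + 3) * (h - 1) + 1))"
proof -
  define z1 :: "'a fps" where "z1 = fps_X ^ (Suc (2 * b + 2) * Suc N)"
  define z2 :: "'a fps" where "z2 = fps_X ^ ((2 * b + 2) * Suc N)"
  have "2 * Suc b + 2 = Suc (Suc (2 * b + 2))" by simp
  then have D: "D_series N (2 * Suc b + 2) =
      (y * fps_X - 1) * ((y - 1) * D_series N (2 * b + 2) + 2 * distinct_part_gf N 0 - z2)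
      + 2 * distinct_part_gf N 0 - z1"
    unfolding z1_def z2_def y_def by (simp only: D_series_Suc power_Suc2)
  have pw: "fps_X ^ (2 * b + 3) = y * fps_X"
    unfolding y_def power_Suc2[symmetric] by (rule arg_cong[where f = "(^) fps_X"]) simp
  have B: "B_series N 0 (Suc b) = B_series N 0 b - y * B_series N 1 b"
    unfolding y_def by (simp add: B_series_Suc)
  have "2 * fps_X * B_series N 0 (Suc b) - (D_series N (2 * Suc b + 2) - 1
      + ((1 - y) * (1 - fps_X ^ (2 * b + 3)) * (R - 1) + 2 * fps_X ^ (2 * b + 3) * (h - 1) + 1)) =
      (1 - y) * (1 - y * fps_X) * (2 * fps_X * B_series N 0 b - (D_series N (2 * b + 2) - 1 + R))
      + 2 * fps_X * y * (odd_part_gf N - distinct_part_gf N 0)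
      + 2 * fps_X * y * ((1 + fps_X - fps_X ^ (2 * b + 3)) * B_series N 0 b - B_series N 1 b
          - (B_series N 0 0 + h))
      + z1 + (y * fps_X - 1) * z2"
    unfolding B D pw B_series_0_0 by algebra
  moreover have "fps_X ^ Suc N dvd z1" "fps_X ^ Suc N dvd z2"
    unfolding z1_def z2_def by (simp_all add: le_imp_power_dvd)
  moreover have "fps_X ^ Suc N dvd odd_part_gf N - distinct_part_gf N 0"
    using distinct_part_gf_cong_odd_part_gf[of N] by (simp add: dvd_diff_commute)
  moreover have "fps_X ^ Suc N dvd
      (1 + fps_X - fps_X ^ (2 * b + 3)) * B_series N 0 b - B_series N 1 b - (B_series N 0 0 + h)"
    by (rule dvd_trans[OF _ h_cong]) (simp add: le_imp_power_dvd)
  ultimately show ?thesis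
    using R_cong by (simp only:) (intro dvd_add dvd_mult; assumption)
qed

lemma B_series_cong_D_series:
  "\<exists>R. fps_degree_le (2 * b * b + 3 * b + 1) R \<and>
     fps_X ^ Suc N dvd 2 * fps_X * B_series N 0 b - (D_series N (2 * b + 2) - 1 + R :: 'a::field fps)"
proof (induction b)
  case 0
  let ?E = "distinct_part_gf N 0 :: 'a fps"
  have D1: "D_series N 1 = 2 * ?E - 1"
    using D_series_Suc[of N 0] by (simp add: D_series_def)
  have D2: "D_series N 2 = (fps_X - 1) * D_series N 1 + 2 * ?E - fps_X ^ Suc N"
    using D_series_Suc[of N 1] by (simp add: numeral_2_eq_2)
  have "2 * fps_X * B_series N 0 0 - (D_series N 2 - 1 + - fps_X) =
      fps_X ^ Suc N - 2 * fps_X * (?E - odd_part_gf N)"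
    unfolding D2 D1 B_series_0_0 by algebra
  also have "fps_X ^ Suc N dvd \<dots>"
    using distinct_part_gf_cong_odd_part_gf[of N] by (rule dvd_diff[OF dvd_refl dvd_mult])
  finally have "fps_X ^ Suc N dvd 2 * fps_X * B_series N 0 0 - (D_series N 2 - 1 + - fps_X :: 'a fps)" .
  moreover have "fps_degree_le 1 (- fps_X :: 'a fps)"
    by (simp add: fps_degree_le_def)
  ultimately show ?case
    unfolding mult_0_right mult_0 add_0 by blast
next
  case (Suc b)
  then obtain R :: "'a fps" where R_deg: "fps_degree_le (2 * b * b + 3 * b + 1) R"
    and R_cong: "fps_X ^ Suc N dvd 2 * fps_X * B_series N 0 b - (D_series N (2 * b + 2) - 1 + R)"
    by blast
  obtain h :: "'a fps" where h_deg: "fps_degree_le (b * b + 3 * b + 2) h"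
    and h_cong: "fps_X ^ (2 * N + 2) dvd
       (1 + fps_X - fps_X ^ (2 * b + 3)) * B_series N 0 b - B_series N 1 b - (B_series N 0 0 + h)"
    using B_series_1_cong by blast
  let ?R = "(1 - fps_X ^ (2 * b + 2)) * (1 - fps_X ^ (2 * b + 3)) * (R - 1) + 2 * fps_X ^ (2 * b + 3) * (h - 1) + 1"
  have "fps_degree_le ((2 * b + 2) + (2 * b + 3) + (2 * b * b + 3 * b + 1))
      ((1 - fps_X ^ (2 * b + 2)) * (1 - fps_X ^ (2 * b + 3)) * (R - 1))"
    by (intro fps_degree_le_mult fps_degree_le_diff R_deg fps_degree_le_1 fps_degree_le_X_power) simp_all
  moreover have "fps_degree_le (0 + (2 * b + 3) + (b * b + 3 * b + 2)) (2 * fps_X ^ (2 * b + 3) * (h - 1))"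
    by (intro fps_degree_le_mult fps_degree_le_diff h_deg fps_degree_le_1 fps_degree_le_numeral
        fps_degree_le_X_power order.refl)
  ultimately have "fps_degree_le (2 * Suc b * Suc b + 3 * Suc b + 1) ?R"
    by (intro fps_degree_le_add fps_degree_le_1) (erule fps_degree_le_mono; simp add: algebra_simps)+
  with B_series_cong_D_series_step[OF R_cong h_cong] show ?case by blast
qed

lemma B_series_nth_eq_D_series_nth:
  assumes "k \<ge> 1" "k * (2 * k - 1) \<le> n"
  shows "2 * B_series (Suc n) 0 (k - 1) $ n = (D_series (Suc n) (2 * k) $ Suc n :: 'a::field)"
proof -
  have k: "2 * (k - 1) + 2 = 2 * k" "2 * (k - 1) * (k - 1) + 3 * (k - 1) + 1 = k * (2 * k - 1)"
    using assms(1) by (cases k; simp add: algebra_simps)+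
  obtain R :: "'a fps" where R_deg: "fps_degree_le (k * (2 * k - 1)) R"
    and R_cong: "fps_X ^ Suc (Suc n) dvd 2 * fps_X * B_series (Suc n) 0 (k - 1) - (D_series (Suc n) (2 * k) - 1 + R)"
    using B_series_cong_D_series[of "k - 1" "Suc n"] unfolding k by blast
  have "(2 * fps_X * B_series (Suc n) 0 (k - 1)) $ Suc n = (D_series (Suc n) (2 * k) - 1 + R) $ Suc n"
    by (rule fps_nth_eq_if_X_power_dvd_diff[OF R_cong]) simp
  moreover have "R $ Suc n = 0"
    using R_deg assms(2) by (simp add: fps_degree_le_def)
  ultimately show ?thesis
    by (simp add: numeral_fps_const mult.assoc)
qed

section \<open>The partition functions as coefficients\<close>

definition D_partitions :: "nat \<Rightarrow> nat \<Rightarrow> nat multiset set" where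
  "D_partitions j t = {p. p \<noteq> {#} \<and> sum_mset p = t \<and> count p (Min (set_mset p)) = j \<and>
     (\<forall>x. x \<noteq> Min (set_mset p) \<longrightarrow> count p x \<le> 1)}"

lemma D_fiber_pos:
  assumes "j \<ge> 1" "1 \<le> m" "m \<le> N" "t \<le> N"
  shows "{p \<in> D_partitions j t. Min (set_mset p) = m} =
    restricted_partitions {m..N} (\<lambda>i. if i = m then {j} else {0, 1}) t"
proof (intro set_eqI iffI)
  fix p assume "p \<in> {p \<in> D_partitions j t. Min (set_mset p) = m}"
  moreover from this have "x \<in># p \<Longrightarrow> x \<in> {m..N}" for x
    using member_le_sum_mset[of x p] assms(4) by (auto simp: D_partitions_def)
  ultimately show "p \<in> restricted_partitions {m..N} (\<lambda>i. if i = m then {j} else {0, 1}) t"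
    unfolding restricted_partitions_iff D_partitions_def
    by (auto simp: le_Suc_eq not_in_iff[symmetric] simp del: atLeastAtMost_iff)
next
  fix p assume p: "p \<in> restricted_partitions {m..N} (\<lambda>i. if i = m then {j} else {0, 1}) t"
  then have cm: "count p m = j" and supp: "\<And>x. x \<in># p \<Longrightarrow> x \<in> {m..N}"
    using assms by (auto simp: restricted_partitions_def dest: bspec[of _ _ m])
  then have "Min (set_mset p) = m"
    using assms(1) by (intro Min_set_mset_eqI) auto
  with p cm supp assms(1) show "p \<in> {p \<in> D_partitions j t. Min (set_mset p) = m}"
    unfolding restricted_partitions_iff D_partitions_def
    by (auto simp: le_Suc_eq not_in_iff[symmetric] split: if_splits)
qed

lemma D_fiber_0:
  assumes "j \<ge> 1" "t \<le> N"
  shows "{p \<in> D_partitions j t. Min (set_mset p) = 0} =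
    (\<lambda>r. replicate_mset j 0 + r) ` restricted_partitions {1..N} (\<lambda>_. {0, 1}) t"
proof (intro set_eqI iffI)
  fix p assume p: "p \<in> {p \<in> D_partitions j t. Min (set_mset p) = 0}"
  define r where "r = filter_mset (\<lambda>x. x \<noteq> 0) p"
  have "count p 0 = j" using p by (auto simp: D_partitions_def)
  then have p_eq: "p = replicate_mset j 0 + r"
    using multiset_partition[of p "\<lambda>x. x = 0"] by (simp add: r_def filter_eq_replicate_mset)
  then have "sum_mset r = t"
    using p arg_cong[OF p_eq, of sum_mset] by (simp add: D_partitions_def)
  moreover have "x \<in># r \<Longrightarrow> x \<in> {1..N}" for x
    using member_le_sum_mset[of x r] assms(2) \<open>sum_mset r = t\<close> by (auto simp: r_def)
  ultimately have "r \<in> restricted_partitions {1..N} (\<lambda>_. {0, 1}) t"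
    using p unfolding restricted_partitions_iff D_partitions_def
    by (auto simp: r_def le_Suc_eq not_in_iff[symmetric] simp del: atLeastAtMost_iff)
  with p_eq show "p \<in> (\<lambda>r. replicate_mset j 0 + r) ` restricted_partitions {1..N} (\<lambda>_. {0, 1}) t"
    by blast
next
  fix p assume "p \<in> (\<lambda>r. replicate_mset j 0 + r) ` restricted_partitions {1..N} (\<lambda>_. {0, 1}) t"
  then obtain r where p: "p = replicate_mset j 0 + r"
    and r: "r \<in> restricted_partitions {1..N} (\<lambda>_. {0, 1}) t" by blast
  have counts: "count r x \<in> (if x \<in> {1..N} then {0, 1} else {0})" for x
    using r unfolding restricted_partitions_iff by blast
  have "count r 0 = 0" "count r x \<le> 1" for x
    using counts[of 0] counts[of x] by (auto split: if_splits)
  moreover have "0 \<in># p" using assms(1) p by simp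
  then have "Min (set_mset p) = 0" by (intro Min_set_mset_eqI) auto
  ultimately show "p \<in> {p \<in> D_partitions j t. Min (set_mset p) = 0}"
    using r assms(1) unfolding p D_partitions_def restricted_partitions_def by auto
qed

lemma distinct_part_gf_eq_prod_multiplicity_series:
  "distinct_part_gf N m = (\<Prod>i=Suc m..N. multiplicity_series {0, 1} 1 i)"
  unfolding distinct_part_gf_def by (intro prod.cong refl) (subst multiplicity_series_0_1; simp)

lemma card_D_fiber:
  assumes "j \<ge> 1" "t \<le> N" "m \<le> N"
  shows "real (card {p \<in> D_partitions j t. Min (set_mset p) = m}) = (fps_X ^ (j * m) * distinct_part_gf N m) $ t"
proof (cases "m = 0")
  case True
  have "inj_on (\<lambda>r. replicate_mset j 0 + r) (restricted_partitions {1..N} (\<lambda>_. {0, 1}) t)"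
    by (rule inj_onI) simp
  then have "real (card {p \<in> D_partitions j t. Min (set_mset p) = m}) =
      real (card (restricted_partitions {1..N} (\<lambda>_. {0, 1}) t))"
    unfolding True D_fiber_0[OF assms(1,2)] by (simp add: card_image)
  also have "\<dots> = (\<Prod>i=1..N. multiplicity_series {0, 1} 1 i) $ t"
    by (rule card_restricted_partitions) auto
  also have "\<dots> = distinct_part_gf N 0 $ t"
    by (simp add: distinct_part_gf_eq_prod_multiplicity_series)
  finally show ?thesis using True by simp
next
  case False
  let ?M = "\<lambda>i. if i = m then {j} else {0, 1}"
  have "real (card {p \<in> D_partitions j t. Min (set_mset p) = m}) =
      (\<Prod>i\<in>{m..N}. multiplicity_series (?M i) 1 i) $ t"
    using False assms by (simp add: D_fiber_pos card_restricted_partitions)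
  also have "(\<Prod>i\<in>{m..N}. multiplicity_series (?M i) 1 i) =
      multiplicity_series {j} 1 m * (\<Prod>i\<in>{Suc m..N}. multiplicity_series {0, 1} 1 i)"
    using assms(3) by (simp add: prod.atLeast_Suc_atMost)
  finally show ?thesis
    using False by (simp add: multiplicity_series_singleton distinct_part_gf_eq_prod_multiplicity_series mult.commute)
qed

lemma D_eq_D_series_nth:
  assumes "j \<ge> 1" "t \<le> N"
  shows "real (D j t) = D_series N j $ t"
proof -
  let ?S = "D_partitions j t" and ?g = "\<lambda>p. Min (set_mset p)"
  have g: "?g ` ?S \<subseteq> {0..N}"
  proof clarify
    fix p assume "p \<in> ?S"
    then have "?g p \<in># p" "sum_mset p = t" by (auto simp: D_partitions_def)
    then show "?g p \<in> {0..N}" using member_le_sum_mset[of "?g p" p] assms(2) by simp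
  qed
  have fibers: "finite {p \<in> ?S. ?g p = m}" if "m \<in> {0..N}" for m
    using assms that by (cases "m = 0") (simp_all add: D_fiber_0 D_fiber_pos finite_restricted_partitions)
  have "real (D j t) = (\<Sum>p\<in>?S. 1)"
    by (simp add: D_def D_partitions_def)
  also have "\<dots> = (\<Sum>m=0..N. \<Sum>p\<in>{p \<in> ?S. ?g p = m}. 1)"
    by (rule sum_by_fibers[OF g _ fibers]) simp_all
  also have "\<dots> = D_series N j $ t"
    using assms by (simp add: card_D_fiber D_series_def fps_sum_nth)
  finally show ?thesis .
qed

lemma P1_partitions_eq:
  assumes "n \<le> N"
  shows "{p. parts_pos p \<and> sum_mset p = n \<and> distinct_parts p \<and> (\<forall>x\<in>#p. x > 1)} =
    restricted_partitions {2..N} (\<lambda>_. {0, 1}) n"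
proof (intro set_eqI iffI)
  fix p assume "p \<in> {p. parts_pos p \<and> sum_mset p = n \<and> distinct_parts p \<and> (\<forall>x\<in>#p. x > 1)}"
  moreover from this have "x \<in># p \<Longrightarrow> x \<le> N" for x
    using member_le_sum_mset[of x p] assms by auto
  ultimately show "p \<in> restricted_partitions {2..N} (\<lambda>_. {0, 1}) n"
    by (auto simp: restricted_partitions_def distinct_parts_def le_Suc_eq)
next
  fix p assume p: "p \<in> restricted_partitions {2..N} (\<lambda>_. {0, 1}) n"
  then have "count p x \<le> 1" for x
    using restricted_partitions_count[OF p, of x] by (auto split: if_splits)
  with p show "p \<in> {p. parts_pos p \<and> sum_mset p = n \<and> distinct_parts p \<and> (\<forall>x\<in>#p. x > 1)}"
    by (auto simp: restricted_partitions_def parts_pos_def distinct_parts_def)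
qed

lemma P1_eq_nth:
  assumes "n \<le> N"
  shows "real (P1 n) = distinct_part_gf N 1 $ n"
proof -
  have "real (P1 n) = (\<Prod>i=2..N. multiplicity_series {0, 1} 1 i) $ n"
    unfolding P1_def P1_partitions_eq[OF assms] by (rule card_restricted_partitions) auto
  then show ?thesis by (simp add: distinct_part_gf_eq_prod_multiplicity_series numeral_2_eq_2)
qed

lemma Pprime_partitions_eq:
  assumes "m \<ge> 1" "n \<le> N" "1 \<le> N"
  shows "{p. parts_pos p \<and> sum_mset p = n \<and> count p 1 = m \<and> Min (set_mset p) = 1 \<and>
      (\<forall>x. x \<noteq> 1 \<longrightarrow> count p x \<le> 1)} =
    restricted_partitions {1..N} (\<lambda>i. if i = 1 then {m} else {0, 1}) n"
proof (intro set_eqI iffI)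
  fix p assume "p \<in> {p. parts_pos p \<and> sum_mset p = n \<and> count p 1 = m \<and> Min (set_mset p) = 1 \<and>
      (\<forall>x. x \<noteq> 1 \<longrightarrow> count p x \<le> 1)}"
  moreover from this have "x \<in># p \<Longrightarrow> x \<le> N" for x
    using member_le_sum_mset[of x p] assms(2) by auto
  ultimately show "p \<in> restricted_partitions {1..N} (\<lambda>i. if i = 1 then {m} else {0, 1}) n"
    by (auto simp: restricted_partitions_def parts_pos_def le_Suc_eq Suc_le_eq)
next
  fix p assume p: "p \<in> restricted_partitions {1..N} (\<lambda>i. if i = 1 then {m} else {0, 1}) n"
  then have "count p 1 = m" "count p x \<le> 1 \<or> x = 1" for x
    using restricted_partitions_count[OF p, of 1] restricted_partitions_count[OF p, of x] assms(3)
    by (auto split: if_splits)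
  moreover have "x \<in># p \<Longrightarrow> 1 \<le> x" for x
    using p by (auto simp: restricted_partitions_def)
  moreover from this \<open>count p 1 = m\<close> have "Min (set_mset p) = 1"
    using assms(1) by (intro Min_set_mset_eqI) auto
  ultimately show "p \<in> {p. parts_pos p \<and> sum_mset p = n \<and> count p 1 = m \<and> Min (set_mset p) = 1 \<and>
      (\<forall>x. x \<noteq> 1 \<longrightarrow> count p x \<le> 1)}"
    using p by (auto simp: restricted_partitions_def parts_pos_def Suc_le_eq)
qed

lemma Pprime_eq_nth:
  assumes "m \<ge> 1" "n \<le> N" "1 \<le> N"
  shows "real (Pprime m n) = (fps_X ^ m * distinct_part_gf N 1) $ n"
proof -
  let ?M = "\<lambda>i. if i = 1 then {m} else {0, 1}"
  have "real (Pprime m n) = (\<Prod>i=1..N. multiplicity_series (?M i) 1 i) $ n"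
    unfolding Pprime_def Pprime_partitions_eq[OF assms] by (rule card_restricted_partitions) auto
  also have "(\<Prod>i=1..N. multiplicity_series (?M i) 1 i) =
      multiplicity_series {m} 1 1 * (\<Prod>i=Suc 1..N. multiplicity_series {0, 1} 1 i)"
    using assms(3) by (simp add: prod.atLeast_Suc_atMost)
  finally show ?thesis
    by (simp add: multiplicity_series_singleton distinct_part_gf_eq_prod_multiplicity_series)
qed

definition P2_partitions :: "nat \<Rightarrow> nat multiset set" where
  "P2_partitions n = {p. parts_pos p \<and> sum_mset p = n \<and> distinct_parts p \<and>
     (\<forall>x\<in>#p. x \<noteq> Min (set_mset p) \<longrightarrow> x \<ge> Min (set_mset p) + 2)}"

lemma P2_fiber:
  assumes "n \<ge> 1" "s \<ge> 1" "n \<le> N"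
  shows "{p \<in> P2_partitions n. Min (set_mset p) = s} =
    restricted_partitions (insert s {s + 2..N}) (\<lambda>i. if i = s then {1} else {0, 1}) n"
proof (intro set_eqI iffI)
  fix p assume p: "p \<in> {p \<in> P2_partitions n. Min (set_mset p) = s}"
  then have "p \<noteq> {#}" using assms(1) by (auto simp: P2_partitions_def)
  then have "s \<in># p" using p Min_in[of "set_mset p"] by auto
  moreover have "x \<in># p \<Longrightarrow> x \<le> N" for x
    using p member_le_sum_mset[of x p] assms(3) by (auto simp: P2_partitions_def)
  ultimately show "p \<in> restricted_partitions (insert s {s + 2..N}) (\<lambda>i. if i = s then {1} else {0, 1}) n"
    using p by (auto simp: restricted_partitions_def P2_partitions_def distinct_parts_def le_Suc_eq
        not_in_iff[symmetric] dest: spec[of _ s])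
next
  fix p assume p: "p \<in> restricted_partitions (insert s {s + 2..N}) (\<lambda>i. if i = s then {1} else {0, 1}) n"
  then have "count p s = 1" "count p x \<le> 1" for x
    using restricted_partitions_count[OF p, of s] restricted_partitions_count[OF p, of x]
    by (auto split: if_splits)
  moreover have supp: "x \<in># p \<Longrightarrow> x = s \<or> s + 2 \<le> x" for x
    using p by (auto simp: restricted_partitions_def)
  moreover have "s \<in># p"
    using \<open>count p s = 1\<close> by (simp flip: count_greater_zero_iff)
  with supp have "Min (set_mset p) = s"
    by (intro Min_set_mset_eqI) force+
  ultimately show "p \<in> {p \<in> P2_partitions n. Min (set_mset p) = s}"
    using p assms(2) by (force simp: restricted_partitions_def P2_partitions_def parts_pos_def distinct_parts_def)
qed

lemma P2_eq_sum_nth: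
  assumes "n \<ge> 1" "n < N"
  shows "real (P2 n) = (\<Sum>s=1..n. (fps_X ^ s * distinct_part_gf N (Suc s)) $ n)"
proof -
  let ?S = "P2_partitions n" and ?g = "\<lambda>p. Min (set_mset p)"
  let ?M = "\<lambda>s i. if i = s then {1} else {0, 1 :: nat}"
  have g: "?g ` ?S \<subseteq> {1..n}"
  proof clarify
    fix p assume "p \<in> ?S"
    moreover from this have "p \<noteq> {#}" using assms(1) by (auto simp: P2_partitions_def)
    then have "?g p \<in># p" using Min_in[of "set_mset p"] by auto
    ultimately show "?g p \<in> {1..n}"
      using member_le_sum_mset[of "?g p" p] by (auto simp: P2_partitions_def parts_pos_def Suc_le_eq)
  qed
  have fiber: "{p \<in> ?S. ?g p = s} = restricted_partitions (insert s {s + 2..N}) (?M s) n"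
    if "s \<in> {1..n}" for s
    using that assms by (intro P2_fiber) auto
  have card_fiber: "real (card {p \<in> ?S. ?g p = s}) = (fps_X ^ s * distinct_part_gf N (Suc s)) $ n"
    if "s \<in> {1..n}" for s
  proof -
    have "real (card {p \<in> ?S. ?g p = s}) =
        (\<Prod>i\<in>insert s {s + 2..N}. multiplicity_series (?M s i) 1 i) $ n"
      unfolding fiber[OF that] using that by (intro card_restricted_partitions) auto
    also have "(\<Prod>i\<in>insert s {s + 2..N}. multiplicity_series (?M s i) 1 i) =
        multiplicity_series {1} 1 s * (\<Prod>i=Suc (Suc s)..N. multiplicity_series {0, 1} 1 i)"
      by (subst prod.insert) auto
    finally show ?thesis
      using that by (simp add: multiplicity_series_singleton distinct_part_gf_eq_prod_multiplicity_series)
  qed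
  have "real (P2 n) = (\<Sum>p\<in>?S. 1)"
    by (simp add: P2_def P2_partitions_def)
  also have "\<dots> = (\<Sum>s=1..n. \<Sum>p\<in>{p \<in> ?S. ?g p = s}. 1)"
    using fiber by (intro sum_by_fibers[OF g]) (simp_all add: finite_restricted_partitions)
  also have "\<dots> = (\<Sum>s=1..n. (fps_X ^ s * distinct_part_gf N (Suc s)) $ n)"
    using card_fiber by simp
  finally show ?thesis .
qed

definition Pdprime_partitions :: "nat \<Rightarrow> nat \<Rightarrow> nat multiset set" where
  "Pdprime_partitions m n = {p. parts_pos p \<and> sum_mset p = n \<and>
     (\<exists>s. count p s = 1 \<and> count p (s + 1) = m \<and> (\<forall>x\<in>#p. s \<le> x) \<and>
          (\<forall>x. x \<noteq> s + 1 \<longrightarrow> count p x \<le> 1))}"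

lemma Pdprime_fiber:
  assumes "m \<ge> 1" "s \<ge> 1" "Suc s \<le> N" "n \<le> N"
  shows "{p \<in> Pdprime_partitions m n. Min (set_mset p) = s} =
    restricted_partitions {s..N} (\<lambda>i. if i = s then {1} else if i = Suc s then {m} else {0, 1}) n"
proof (intro set_eqI iffI)
  fix p assume p: "p \<in> {p \<in> Pdprime_partitions m n. Min (set_mset p) = s}"
  then obtain s' where s': "count p s' = 1" "count p (s' + 1) = m" "\<forall>x\<in>#p. s' \<le> x"
    "\<forall>x. x \<noteq> s' + 1 \<longrightarrow> count p x \<le> 1"
    by (auto simp: Pdprime_partitions_def)
  then have "s' \<in># p" by (simp flip: count_greater_zero_iff)
  with s' p have "s' = s" by (metis (mono_tags, lifting) Min_set_mset_eqI mem_Collect_eq)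
  moreover have "x \<in># p \<Longrightarrow> x \<le> N" for x
    using p member_le_sum_mset[of x p] assms(4) by (auto simp: Pdprime_partitions_def)
  ultimately show "p \<in> restricted_partitions {s..N}
      (\<lambda>i. if i = s then {1} else if i = Suc s then {m} else {0, 1}) n"
    using p s' by (auto simp: restricted_partitions_def Pdprime_partitions_def le_Suc_eq)
next
  fix p assume p: "p \<in> restricted_partitions {s..N}
      (\<lambda>i. if i = s then {1} else if i = Suc s then {m} else {0, 1}) n"
  then have "count p s = 1" "count p (Suc s) = m" "count p x \<le> 1 \<or> x = Suc s" for x
    using restricted_partitions_count[OF p, of s] restricted_partitions_count[OF p, of "Suc s"]
      restricted_partitions_count[OF p, of x] assms(3)
    by (auto split: if_splits)
  moreover have supp: "x \<in># p \<Longrightarrow> s \<le> x" for x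
    using p by (auto simp: restricted_partitions_def)
  moreover have "s \<in># p"
    using \<open>count p s = 1\<close> by (simp flip: count_greater_zero_iff)
  with supp have "Min (set_mset p) = s"
    by (intro Min_set_mset_eqI)
  moreover have "x \<in># p \<Longrightarrow> 0 < x" for x
    using supp assms(2) by fastforce
  ultimately show "p \<in> {p \<in> Pdprime_partitions m n. Min (set_mset p) = s}"
    using p supp unfolding Pdprime_partitions_def
    by (auto simp: restricted_partitions_def parts_pos_def intro!: exI[of _ s])
qed

lemma Pdprime_eq_sum_nth:
  assumes "m \<ge> 1" "n < N"
  shows "real (Pdprime m n) = (\<Sum>s=1..n. (fps_X ^ s * fps_X ^ (Suc s * m) * distinct_part_gf N (Suc s)) $ n)"
proof -
  let ?S = "Pdprime_partitions m n" and ?g = "\<lambda>p. Min (set_mset p)"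
  let ?M = "\<lambda>s i. if i = s then {1} else if i = Suc s then {m} else {0, 1 :: nat}"
  have g: "?g ` ?S \<subseteq> {1..n}"
  proof clarify
    fix p assume p: "p \<in> ?S"
    then obtain s where "count p s = 1" by (auto simp: Pdprime_partitions_def)
    then have "p \<noteq> {#}" by auto
    then have "?g p \<in># p" using Min_in[of "set_mset p"] by auto
    with p show "?g p \<in> {1..n}"
      using member_le_sum_mset[of "?g p" p] by (auto simp: Pdprime_partitions_def parts_pos_def Suc_le_eq)
  qed
  have fiber: "{p \<in> ?S. ?g p = s} = restricted_partitions {s..N} (?M s) n" if "s \<in> {1..n}" for s
    using that assms by (intro Pdprime_fiber) auto
  have card_fiber:
    "real (card {p \<in> ?S. ?g p = s}) = (fps_X ^ s * fps_X ^ (Suc s * m) * distinct_part_gf N (Suc s)) $ n"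
    if "s \<in> {1..n}" for s
  proof -
    have "real (card {p \<in> ?S. ?g p = s}) = (\<Prod>i=s..N. multiplicity_series (?M s i) 1 i) $ n"
      unfolding fiber[OF that] using that by (intro card_restricted_partitions) auto
    also have "(\<Prod>i=s..N. multiplicity_series (?M s i) 1 i) = multiplicity_series {1} 1 s *
        (multiplicity_series {m} 1 (Suc s) * (\<Prod>i=Suc (Suc s)..N. multiplicity_series {0, 1} 1 i))"
      using that assms by (simp add: prod.atLeast_Suc_atMost)
    finally show ?thesis
      using that by (simp add: multiplicity_series_singleton distinct_part_gf_eq_prod_multiplicity_series
          mult.assoc)
  qed
  have "real (Pdprime m n) = (\<Sum>p\<in>?S. 1)"
    by (simp add: Pdprime_def Pdprime_partitions_def)
  also have "\<dots> = (\<Sum>s=1..n. \<Sum>p\<in>{p \<in> ?S. ?g p = s}. 1)"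
    using fiber by (intro sum_by_fibers[OF g]) (simp_all add: finite_restricted_partitions)
  also have "\<dots> = (\<Sum>s=1..n. (fps_X ^ s * fps_X ^ (Suc s * m) * distinct_part_gf N (Suc s)) $ n)"
    using card_fiber by simp
  finally show ?thesis .
qed

lemma sum_atLeast_1_Suc: "(\<Sum>m=1..Suc n. f m) = f 1 + (\<Sum>s=1..n. f (Suc s))"
proof -
  have "(\<Sum>m=1..Suc n. f m) = f 1 + (\<Sum>m=Suc 1..Suc n. f m)"
    by (rule sum.atLeast_Suc_atMost) simp
  also have "(\<Sum>m=Suc 1..Suc n. f m) = (\<Sum>s=1..n. f (Suc s))"
    by (rule sum.shift_bounds_cl_Suc_ivl)
  finally show ?thesis .
qed

lemma P1_add_P2_eq_nth:
  assumes "n \<ge> 1"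
  shows "real (P1 n) + real (P2 n) = (\<Sum>m=1..Suc n. fps_X ^ (m - 1) * distinct_part_gf (Suc n) m) $ n"
  unfolding sum_atLeast_1_Suc
  using assms by (simp add: P1_eq_nth[of n "Suc n"] P2_eq_sum_nth[of n "Suc n"] fps_sum_nth)

lemma Pprime_add_Pdprime_eq_nth:
  assumes "c \<ge> 2" "n \<ge> 1"
  shows "real (Pprime (c - 1) n) + real (Pdprime (c - 1) n) =
    (\<Sum>m=1..Suc n. fps_X ^ (c * m - 1) * distinct_part_gf (Suc n) m) $ n"
proof -
  let ?E = "distinct_part_gf (Suc n) :: nat \<Rightarrow> real fps"
  have exps: "s + Suc s * (c - 1) = c * Suc s - 1" for s
    using assms(1) by (cases c) (auto simp: algebra_simps)
  have "real (Pdprime (c - 1) n) = (\<Sum>s=1..n. (fps_X ^ s * fps_X ^ (Suc s * (c - 1)) * ?E (Suc s)) $ n)"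
    by (rule Pdprime_eq_sum_nth) (use assms in auto)
  also have "\<dots> = (\<Sum>s=1..n. (fps_X ^ (c * Suc s - 1) * ?E (Suc s)) $ n)"
    by (intro sum.cong refl) (simp only: power_add[symmetric] exps)
  moreover have "real (Pprime (c - 1) n) = (fps_X ^ (c - 1) * ?E 1) $ n"
    by (rule Pprime_eq_nth) (use assms in auto)
  ultimately show ?thesis
    unfolding sum_atLeast_1_Suc by (simp add: fps_sum_nth)
qed

lemma D_series_eq_sum_from_1:
  "D_series N s = distinct_part_gf N 0 + (\<Sum>m=1..N. fps_X ^ (s * m) * distinct_part_gf N m)"
  unfolding D_series_def by (subst sum.atLeast_Suc_atMost) simp_all

lemma A_eq_D_series_nth:
  assumes "c \<ge> 2" "n \<ge> 1"
  shows "2 * A c n = D_series (Suc n) c $ Suc n"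
proof -
  let ?E = "distinct_part_gf (Suc n) :: nat \<Rightarrow> real fps"
  have X_pow: "fps_X * fps_X ^ (i - 1) = (fps_X ^ i :: real fps)" if "i \<ge> 1" for i
    using that by (cases i) simp_all
  have "fps_X * ((fps_X ^ (m - 1) + fps_X ^ (c * m - 1)) * ?E m) = (fps_X ^ (1 * m) + fps_X ^ (c * m)) * ?E m"
    if "m \<in> {1..Suc n}" for m
    using X_pow[of m] X_pow[of "c * m"] that assms by (simp add: distrib_left mult.assoc[symmetric])
  then have "fps_X * (\<Sum>m=1..Suc n. (fps_X ^ (m - 1) + fps_X ^ (c * m - 1)) * ?E m) =
      (\<Sum>m=1..Suc n. (fps_X ^ (1 * m) + fps_X ^ (c * m)) * ?E m)"
    unfolding sum_distrib_left by (rule sum.cong[OF refl])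
  also have "\<dots> = D_series (Suc n) 1 + D_series (Suc n) c - 2 * ?E 0"
    unfolding D_series_eq_sum_from_1 by (simp add: distrib_right sum.distrib)
  also have "\<dots> = D_series (Suc n) c - 1"
    using D_series_Suc[of "Suc n" 0] by (simp add: algebra_simps)
  finally have "(fps_X * (\<Sum>m=1..Suc n. (fps_X ^ (m - 1) + fps_X ^ (c * m - 1)) * ?E m)) $ Suc n =
      (D_series (Suc n) c - 1) $ Suc n"
    by (rule arg_cong)
  moreover have "2 * A c n = (\<Sum>m=1..Suc n. (fps_X ^ (m - 1) + fps_X ^ (c * m - 1)) * ?E m) $ n"
    using P1_add_P2_eq_nth[OF assms(2)] Pprime_add_Pdprime_eq_nth[OF assms]
    by (simp add: A_def algebra_simps sum.distrib fps_sum_nth)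
  ultimately show ?thesis by (simp del: fps_X_mult_nth add: fps_X_mult_nth[of _ "Suc n"])
qed

lemma mem_odd_parts_upto: "(v :: nat) \<in> (\<lambda>i. 2 * i - 1) ` {1..l} \<longleftrightarrow> odd v \<and> v \<le> 2 * l - 1"
proof
  assume "odd v \<and> v \<le> 2 * l - 1"
  then have "v = 2 * ((v + 1) div 2) - 1" "(v + 1) div 2 \<in> {1..l}" by presburger+
  then show "v \<in> (\<lambda>i. 2 * i - 1) ` {1..l}" by blast
qed auto

lemma mem_even_parts_between:
  "(v :: nat) \<in> (\<lambda>i. 2 * l + 2 * i) ` {1..b} \<longleftrightarrow> even v \<and> 2 * l + 2 \<le> v \<and> v \<le> 2 * l + 2 * b"
proof
  assume "even v \<and> 2 * l + 2 \<le> v \<and> v \<le> 2 * l + 2 * b"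
  then have "v = 2 * l + 2 * ((v - 2 * l) div 2)" "(v - 2 * l) div 2 \<in> {1..b}" by presburger+
  then show "v \<in> (\<lambda>i. 2 * l + 2 * i) ` {1..b}" by blast
qed auto

lemma prod_even_parts_between:
  "(\<Prod>v\<in>(\<lambda>i. 2 * l + 2 * i) ` {1..b}. multiplicity_series {0, 1} (-1) v) = (even_gap_gf b l :: 'a::comm_ring_1 fps)"
proof -
  have "multiplicity_series {0, 1} (-1) v = 1 - (fps_X ^ v :: 'a fps)" if "v > 0" for v
    by (subst multiplicity_series_0_1) (simp_all add: that fps_const_neg[symmetric])
  then show ?thesis
    unfolding even_gap_gf_def by (subst prod.reindex) (auto simp: inj_on_def intro!: prod.cong)
qed

definition largest_odd_part :: "nat multiset \<Rightarrow> nat" where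
  "largest_odd_part p = Max {x \<in> set_mset p. odd x}"

lemma largest_odd_part:
  assumes "\<exists>x\<in>#p. odd x"
  shows "largest_odd_part p \<in># p" "odd (largest_odd_part p)"
  using assms Max_in[of "{x \<in> set_mset p. odd x}"] by (auto simp: largest_odd_part_def)

lemma largest_odd_part_ge: "x \<in># p \<Longrightarrow> odd x \<Longrightarrow> x \<le> largest_odd_part p"
  by (simp add: largest_odd_part_def)

lemma largest_odd_part_eqI:
  "L \<in># p \<Longrightarrow> odd L \<Longrightarrow> (\<And>x. x \<in># p \<Longrightarrow> odd x \<Longrightarrow> x \<le> L) \<Longrightarrow> largest_odd_part p = L"
  unfolding largest_odd_part_def by (rule Max_eqI) auto

definition B_partitions :: "nat \<Rightarrow> nat \<Rightarrow> nat multiset set" where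
  "B_partitions k n = {p. parts_pos p \<and> sum_mset p = n \<and> (\<exists>x\<in>#p. odd x) \<and>
     (\<forall>x\<in>#p. even x \<longrightarrow>
        largest_odd_part p + 3 \<le> x \<and> x \<le> largest_odd_part p + 2 * k - 1 \<and> count p x = 1)}"

definition B_parts :: "nat \<Rightarrow> nat \<Rightarrow> nat set" where
  "B_parts k l = (\<lambda>i. 2 * i - 1) ` {1..l} \<union> (\<lambda>i. 2 * l + 2 * i) ` {1..k - 1}"

definition B_counts :: "nat \<Rightarrow> nat \<Rightarrow> nat set" where
  "B_counts l v = (if v = 2 * l - 1 then {c. c \<ge> 1} else if odd v then UNIV else {0, 1})"

lemma mem_B_parts:
  "v \<in> B_parts k l \<longleftrightarrow> odd v \<and> v \<le> 2 * l - 1 \<or> even v \<and> 2 * l + 2 \<le> v \<and> v \<le> 2 * l + 2 * (k - 1)"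
  unfolding B_parts_def Un_iff mem_odd_parts_upto mem_even_parts_between ..

lemma B_fiber:
  assumes "k \<ge> 1" "l \<ge> 1"
  shows "{p \<in> B_partitions k n. (largest_odd_part p + 1) div 2 = l} =
    restricted_partitions (B_parts k l) (B_counts l) n"
proof (intro set_eqI iffI)
  fix p assume p: "p \<in> {p \<in> B_partitions k n. (largest_odd_part p + 1) div 2 = l}"
  then have L: "largest_odd_part p \<in># p" "largest_odd_part p = 2 * l - 1"
    using largest_odd_part[of p] by (auto simp: B_partitions_def elim!: oddE)
  have odd_le: "x \<le> 2 * l - 1" if "x \<in># p" "odd x" for x
    using largest_odd_part_ge[OF that] L(2) by simp
  have even_range: "2 * l + 2 \<le> x \<and> x \<le> 2 * l + 2 * (k - 1) \<and> count p x = 1"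
    if "x \<in># p" "even x" for x
  proof -
    have "largest_odd_part p + 3 \<le> x" "x \<le> largest_odd_part p + 2 * k - 1" "count p x = 1"
      using p that by (auto simp: B_partitions_def)
    with L(2) assms show ?thesis by (intro conjI; linarith)
  qed
  have "x \<in> B_parts k l" if "x \<in># p" for x
    using odd_le[OF that] even_range[OF that] by (cases "odd x") (auto simp: mem_B_parts)
  then have "set_mset p \<subseteq> B_parts k l" by auto
  moreover have "count p v \<in> B_counts l v" for v
    using L even_range[of v]
    by (cases "v \<in># p") (auto simp: B_counts_def Suc_le_eq, auto simp: B_counts_def not_in_iff)
  ultimately show "p \<in> restricted_partitions (B_parts k l) (B_counts l) n"
    using p by (auto simp: restricted_partitions_def B_partitions_def)
next
  fix p assume p: "p \<in> restricted_partitions (B_parts k l) (B_counts l) n"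
  have supp: "x \<in> B_parts k l" if "x \<in># p" for x
    using p that by (auto simp: restricted_partitions_def)
  have "count p (2 * l - 1) \<ge> 1"
    using restricted_partitions_count[OF p, of "2 * l - 1"] assms(2)
    by (auto simp: B_counts_def mem_B_parts split: if_splits)
  then have "2 * l - 1 \<in># p" by (simp flip: count_greater_zero_iff)
  moreover have "odd (2 * l - 1)" using assms(2) by simp
  ultimately have L: "largest_odd_part p = 2 * l - 1"
    using supp by (intro largest_odd_part_eqI) (auto simp: mem_B_parts)
  moreover have "count p x = 1" if "x \<in># p" "even x" for x
    using restricted_partitions_count[OF p, of x] that supp[OF that(1)] assms(2)
    by (auto simp: B_counts_def count_eq_zero_iff split: if_splits)
  moreover have "0 < x" "even x \<Longrightarrow> 2 * l - 1 + 3 \<le> x \<and> x \<le> 2 * l - 1 + 2 * k - 1"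
    if "x \<in># p" for x
    using supp[OF that] assms by (auto simp: mem_B_parts elim: oddE)
  ultimately show "p \<in> {p \<in> B_partitions k n. (largest_odd_part p + 1) div 2 = l}"
    using p assms(2) \<open>2 * l - 1 \<in># p\<close> \<open>odd (2 * l - 1)\<close>
    by (auto simp: B_partitions_def restricted_partitions_def parts_pos_def intro!: bexI[of _ "2 * l - 1"])
qed

lemma B_parts_prod:
  assumes "l \<ge> 1"
  shows "(\<Prod>v\<in>B_parts k l. multiplicity_series (B_counts l v) (if even v then -1 else 1) v) =
    fps_X ^ (2 * l - 1) * odd_part_gf l * (even_gap_gf (k - 1) l :: 'a::field fps)"
proof -
  let ?f = "\<lambda>v. multiplicity_series (B_counts l v) (if even v then -1 else 1) v :: 'a fps"
  obtain l' where l': "l = Suc l'" using assms by (cases l) auto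
  have "(\<Prod>v\<in>(\<lambda>i. 2 * i - 1) ` {1..l}. ?f v) = (\<Prod>i=1..l. ?f (2 * i - 1))"
    by (rule prod.reindex_cong[where l = "\<lambda>i. 2 * i - 1"]) (auto simp: inj_on_def)
  also have "\<dots> = (\<Prod>i=1..l'. inverse (1 - fps_X ^ (2 * i - 1))) *
      (fps_X ^ (2 * l - 1) * inverse (1 - fps_X ^ (2 * l - 1)))"
    unfolding l' using multiplicity_series_positive[of "2 * l' + 1", where 'a = 'a]
    by (auto simp: B_counts_def multiplicity_series_UNIV intro!: prod.cong)
  finally have odd_part: "(\<Prod>v\<in>(\<lambda>i. 2 * i - 1) ` {1..l}. ?f v) = fps_X ^ (2 * l - 1) * odd_part_gf l"
    unfolding odd_part_gf_def l' by (simp add: algebra_simps)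
  have even_part: "(\<Prod>v\<in>(\<lambda>i. 2 * l + 2 * i) ` {1..k - 1}. ?f v) = even_gap_gf (k - 1) l"
    by (subst prod_even_parts_between[symmetric])
      (auto intro!: prod.cong simp: B_counts_def mem_even_parts_between)
  have disj: "(\<lambda>i. 2 * i - 1) ` {1..l} \<inter> (\<lambda>i. 2 * l + 2 * i) ` {1..k - 1} = {}"
    unfolding disjoint_iff mem_odd_parts_upto mem_even_parts_between by auto
  show ?thesis
    unfolding B_parts_def prod.union_disjoint[OF finite_imageI[OF finite_atLeastAtMost]
        finite_imageI[OF finite_atLeastAtMost] disj] odd_part even_part ..
qed

lemma B_diff_eq_B_series_nth:
  assumes "k \<ge> 1" "n \<le> N"
  shows "real (Be k n) - real (Bo k n) = B_series N 0 (k - 1) $ n"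
proof -
  let ?S = "B_partitions k n" and ?g = "\<lambda>p. (largest_odd_part p + 1) div 2"
  let ?\<sigma> = "\<lambda>v. if even v then -1 else 1 :: real"
  have g: "?g ` ?S \<subseteq> {1..N}"
  proof clarify
    fix p assume p: "p \<in> ?S"
    then have "largest_odd_part p \<in># p" "odd (largest_odd_part p)"
      using largest_odd_part[of p] by (auto simp: B_partitions_def)
    with p show "?g p \<in> {1..N}"
      using member_le_sum_mset[of "largest_odd_part p" p] assms(2) by (auto simp: B_partitions_def elim!: oddE)
  qed
  have fiber: "{p \<in> ?S. ?g p = l} = restricted_partitions (B_parts k l) (B_counts l) n"
    if "l \<in> {1..N}" for l
    using that assms by (intro B_fiber) auto
  have fin: "finite (B_parts k l)" "0 \<notin> B_parts k l" for l
    by (auto simp: B_parts_def)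
  have fibers_fin: "finite {p \<in> ?S. ?g p = l}" if "l \<in> {1..N}" for l
    unfolding fiber[OF that] by (rule finite_restricted_partitions[OF fin])
  have "real (Be k n) - real (Bo k n) = real (card {p \<in> ?S. even (size (filter_mset even p))})
      - real (card {p \<in> ?S. \<not> even (size (filter_mset even p))})"
    by (simp add: Be_def Bo_def Bset_def B_partitions_def largest_odd_part_def Let_def)
  also have "\<dots> = (\<Sum>p\<in>?S. if even (size (filter_mset even p)) then 1 else -1)"
    by (rule card_filter_diff_eq_sum_sign[OF finite_if_finite_fibers[OF g _ fibers_fin]]) simp
  also have "\<dots> = (\<Sum>p\<in>?S. \<Prod>x\<in>#p. ?\<sigma> x)"
    by (simp add: prod_mset_sign minus_one_power_iff)
  also have "\<dots> = (\<Sum>l=1..N. \<Sum>p\<in>{p \<in> ?S. ?g p = l}. \<Prod>x\<in>#p. ?\<sigma> x)"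
    by (rule sum_by_fibers[OF g _ fibers_fin]) simp
  also have "\<dots> = (\<Sum>l=1..N. (fps_X ^ (2 * l - 1) * odd_part_gf l * even_gap_gf (k - 1) l) $ n)"
    by (intro sum.cong refl)
      (simp add: fiber restricted_partitions_gf[OF fin] B_parts_prod del: One_nat_def)
  also have "\<dots> = B_series N 0 (k - 1) $ n"
    by (simp add: B_series_def largest_odd_sum_def fps_sum_nth)
  finally show ?thesis .
qed

definition C_pairs :: "nat \<Rightarrow> nat \<Rightarrow> (nat multiset \<times> nat) set" where
  "C_pairs k n = {(p, l). l \<ge> 1 \<and> parts_pos p \<and> sum_mset p = n \<and> 2 * l \<in># p \<and>
     (\<forall>x. x \<le> l \<longrightarrow> count p x \<le> 1) \<and>
     (\<forall>x\<in>#p. x > 2 * l \<longrightarrow> even x \<and> 2 * l + 2 \<le> x \<and> x \<le> 2 * l + 2 * k - 2 \<and> count p x = 1)}"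

definition C_parts :: "nat \<Rightarrow> nat \<Rightarrow> nat set" where
  "C_parts k l = {1..2 * l} \<union> (\<lambda>i. 2 * l + 2 * i) ` {1..k - 1}"

definition C_counts :: "nat \<Rightarrow> nat \<Rightarrow> nat set" where
  "C_counts l v = (if v \<le> l then {0, 1} else if v < 2 * l then UNIV else if v = 2 * l then {c. c \<ge> 1}
     else {0, 1})"

lemma mem_C_parts:
  "v \<in> C_parts k l \<longleftrightarrow> 1 \<le> v \<and> v \<le> 2 * l \<or> even v \<and> 2 * l + 2 \<le> v \<and> v \<le> 2 * l + 2 * (k - 1)"
  unfolding C_parts_def Un_iff mem_even_parts_between atLeastAtMost_iff ..

lemma C_fiber:
  assumes "k \<ge> 1" "l \<ge> 1"
  shows "{p. (p, l) \<in> C_pairs k n} = restricted_partitions (C_parts k l) (C_counts l) n"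
proof (intro set_eqI iffI)
  fix p assume p: "p \<in> {p. (p, l) \<in> C_pairs k n}"
  then have big: "2 * l + 2 \<le> x \<and> x \<le> 2 * l + 2 * (k - 1) \<and> even x \<and> count p x = 1"
    if "x \<in># p" "x > 2 * l" for x
    using that assms by (auto simp: C_pairs_def)
  have "x \<in> C_parts k l" if "x \<in># p" for x
    using p that big[OF that] by (cases "x \<le> 2 * l") (auto simp: C_pairs_def parts_pos_def mem_C_parts)
  moreover have "count p v \<in> C_counts l v" for v
    using p big[of v] by (cases "v \<in># p")
      (auto simp: C_pairs_def C_counts_def le_Suc_eq Suc_le_eq, auto simp: C_pairs_def C_counts_def not_in_iff)
  ultimately show "p \<in> restricted_partitions (C_parts k l) (C_counts l) n"
    using p by (auto simp: restricted_partitions_def C_pairs_def)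
next
  fix p assume p: "p \<in> restricted_partitions (C_parts k l) (C_counts l) n"
  have supp: "x \<in> C_parts k l" if "x \<in># p" for x
    using p that by (auto simp: restricted_partitions_def)
  have "count p (2 * l) \<ge> 1"
    using restricted_partitions_count[OF p, of "2 * l"] assms(2)
    by (auto simp: C_counts_def mem_C_parts)
  then have "2 * l \<in># p" by (simp flip: count_greater_zero_iff)
  moreover have "count p x \<le> 1" if "x \<le> l" for x
    using restricted_partitions_count[OF p, of x] that by (auto simp: C_counts_def split: if_splits)
  moreover have "count p x = 1" if "x \<in># p" "x > 2 * l" for x
    using restricted_partitions_count[OF p, of x] that supp[OF that(1)]
    by (auto simp: C_counts_def count_eq_zero_iff split: if_splits)
  moreover have "0 < x" "x > 2 * l \<Longrightarrow> even x \<and> 2 * l + 2 \<le> x \<and> x \<le> 2 * l + 2 * k - 2"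
    if "x \<in># p" for x
    using supp[OF that] assms by (auto simp: mem_C_parts)
  ultimately show "p \<in> {p. (p, l) \<in> C_pairs k n}"
    using p assms(2) by (auto simp: C_pairs_def restricted_partitions_def parts_pos_def)
qed

lemma distinct_times_inverse_prod:
  "(\<Prod>v=1..l. 1 + fps_X ^ v) * (\<Prod>v=Suc l..2 * l. inverse (1 - fps_X ^ v)) = (odd_part_gf l :: 'a::field fps)"
proof -
  define Q :: "'a fps" where "Q = (\<Prod>i=1..l. 1 - fps_X ^ (2 * i - 1))"
  define R :: "'a fps" where "R = (\<Prod>v=Suc l..2 * l. 1 - fps_X ^ v)"
  have "Q $ 0 = 1" "R $ 0 = 1"
    unfolding Q_def R_def by (simp_all add: fps_prod_nth' prod.neutral)
  then have "Q * inverse Q = 1" "R * inverse R = 1"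
    by (simp_all add: inverse_mult_eq_1')
  moreover have "(\<Prod>v=1..l. 1 + fps_X ^ v) * Q = R"
    unfolding Q_def R_def by (rule distinct_times_odd_prod)
  ultimately have "(\<Prod>v=1..l. 1 + fps_X ^ v) * inverse R = inverse Q"
    by algebra
  then show ?thesis
    by (simp add: odd_part_gf_def Q_def R_def inverse_prod_fps)
qed

lemma C_parts_prod:
  assumes "l \<ge> 1"
  shows "(\<Prod>v\<in>C_parts k l. multiplicity_series (C_counts l v) (if v > 2 * l then -1 else 1) v) =
    fps_X ^ (2 * l) * odd_part_gf l * (even_gap_gf (k - 1) l :: 'a::field fps)"
proof -
  let ?f = "\<lambda>v. multiplicity_series (C_counts l v) (if v > 2 * l then -1 else 1) v :: 'a fps"
  obtain m where m: "2 * l = Suc m" "l \<le> m" using assms by (cases l) auto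
  have low: "(\<Prod>v=1..l. ?f v) = (\<Prod>v=1..l. 1 + fps_X ^ v)"
  proof (intro prod.cong refl)
    fix v assume "v \<in> {1..l}"
    then show "?f v = 1 + fps_X ^ v"
      using multiplicity_series_0_1[of v "1 :: 'a"] by (simp add: C_counts_def)
  qed
  have high: "(\<Prod>v=Suc l..2 * l. ?f v) = fps_X ^ (2 * l) * (\<Prod>v=Suc l..2 * l. inverse (1 - fps_X ^ v))"
  proof -
    have "(\<Prod>v=Suc l..m. ?f v) = (\<Prod>v=Suc l..m. inverse (1 - fps_X ^ v))"
      using m by (intro prod.cong refl) (auto simp: C_counts_def multiplicity_series_UNIV)
    moreover have "?f (Suc m) = fps_X ^ Suc m * inverse (1 - fps_X ^ Suc m)"
      using m multiplicity_series_positive[of "Suc m", where 'a = 'a] by (simp add: C_counts_def)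
    ultimately show ?thesis
      unfolding m(1) using m(2) by (simp add: algebra_simps)
  qed
  have "(\<Prod>v=1..2 * l. ?f v) = (\<Prod>v=1..l. ?f v) * (\<Prod>v=Suc l..2 * l. ?f v)"
    using prod.ub_add_nat[of 1 l ?f l] by (simp add: mult_2)
  also have "\<dots> = fps_X ^ (2 * l) * odd_part_gf l"
    unfolding low high distinct_times_inverse_prod[symmetric] by (simp only: ac_simps)
  finally have "(\<Prod>v=1..2 * l. ?f v) = fps_X ^ (2 * l) * odd_part_gf l" .
  moreover have "(\<Prod>v\<in>(\<lambda>i. 2 * l + 2 * i) ` {1..k - 1}. ?f v) = even_gap_gf (k - 1) l"
    by (subst prod_even_parts_between[symmetric])
      (auto intro!: prod.cong simp: C_counts_def mem_even_parts_between)
  moreover have "{1..2 * l} \<inter> (\<lambda>i. 2 * l + 2 * i) ` {1..k - 1} = {}"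
    unfolding disjoint_iff mem_even_parts_between by auto
  ultimately show ?thesis
    unfolding C_parts_def by (simp add: prod.union_disjoint)
qed

lemma X_times_B_series_0:
  "fps_X * B_series N 0 b = (\<Sum>l=1..N. fps_X ^ (2 * l) * odd_part_gf l * (even_gap_gf b l :: 'a::field fps))"
proof -
  have "fps_X * fps_X ^ (2 * l - 1) = (fps_X ^ (2 * l) :: 'a fps)" if "l \<ge> 1" for l :: nat
    using that by (cases l) simp_all
  then show ?thesis
    unfolding B_series_def largest_odd_sum_def sum_distrib_left
    by (intro sum.cong refl) (auto simp: mult.assoc[symmetric])
qed

lemma C_diff_eq_B_series_nth:
  assumes "k \<ge> 1" "t \<le> N"
  shows "real (Ce k t) - real (Co k t) = (fps_X * B_series N 0 (k - 1)) $ t"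
proof -
  let ?S = "C_pairs k t"
  let ?sign = "\<lambda>q :: nat multiset \<times> nat.
    if even (size (filter_mset (\<lambda>x. x > 2 * snd q) (fst q))) then 1 else -1 :: real"
  have g: "snd ` ?S \<subseteq> {1..N}"
  proof clarify
    fix p l assume "(p, l) \<in> ?S"
    then show "snd (p, l) \<in> {1..N}"
      using member_le_sum_mset[of "2 * l" p] assms(2) by (auto simp: C_pairs_def)
  qed
  have fiber: "{q \<in> ?S. snd q = l} = (\<lambda>p. (p, l)) ` restricted_partitions (C_parts k l) (C_counts l) t"
    if "l \<in> {1..N}" for l
    using that assms C_fiber[of k l t] by force
  have fin: "finite (C_parts k l)" "0 \<notin> C_parts k l" for l
    by (auto simp: C_parts_def)
  have fibers_fin: "finite {q \<in> ?S. snd q = l}" if "l \<in> {1..N}" for l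
    unfolding fiber[OF that] by (rule finite_imageI[OF finite_restricted_partitions[OF fin]])
  have "real (Ce k t) - real (Co k t) =
      real (card {q \<in> ?S. even (size (filter_mset (\<lambda>x. x > 2 * snd q) (fst q)))})
      - real (card {q \<in> ?S. \<not> even (size (filter_mset (\<lambda>x. x > 2 * snd q) (fst q)))})"
    by (simp add: Ce_def Co_def Cset_def C_pairs_def split_def)
  also have "\<dots> = (\<Sum>q\<in>?S. ?sign q)"
    by (rule card_filter_diff_eq_sum_sign[OF finite_if_finite_fibers[OF g _ fibers_fin]]) simp
  also have "\<dots> = (\<Sum>l=1..N. \<Sum>q\<in>{q \<in> ?S. snd q = l}. ?sign q)"
    by (rule sum_by_fibers[OF g _ fibers_fin]) simp
  also have "\<dots> = (\<Sum>l=1..N. (fps_X ^ (2 * l) * odd_part_gf l * even_gap_gf (k - 1) l) $ t)"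
  proof (intro sum.cong refl)
    fix l assume l: "l \<in> {1..N}"
    have "(\<Sum>q\<in>{q \<in> ?S. snd q = l}. ?sign q) =
        (\<Sum>p\<in>restricted_partitions (C_parts k l) (C_counts l) t. \<Prod>x\<in>#p. if x > 2 * l then -1 else 1)"
      unfolding fiber[OF l] by (subst sum.reindex) (auto simp: inj_on_def prod_mset_sign minus_one_power_iff)
    also have "\<dots> = (fps_X ^ (2 * l) * odd_part_gf l * even_gap_gf (k - 1) l) $ t"
      using l by (simp add: restricted_partitions_gf[OF fin] C_parts_prod)
    finally show "(\<Sum>q\<in>{q \<in> ?S. snd q = l}. ?sign q) = \<dots>" .
  qed
  also have "\<dots> = (fps_X * B_series N 0 (k - 1)) $ t"
    unfolding X_times_B_series_0 fps_sum_nth ..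
  finally show ?thesis .
qed

theorem theorem5:
  fixes k n :: nat
  assumes "k \<ge> 1"
    and "n \<ge> 2 ^ (k - 1) * k * (2 * k - 1)"
  shows "A (2 * k) n = real (Be k n) - real (Bo k n)
    \<and> real (Be k n) - real (Bo k n) = real (Ce k (n + 1)) - real (Co k (n + 1))
    \<and> real (Ce k (n + 1)) - real (Co k (n + 1)) = real (D (2 * k) (n + 1)) / 2"
proof -
  have "k * (2 * k - 1) \<le> 2 ^ (k - 1) * k * (2 * k - 1)"
    by simp
  with assms have n: "k * (2 * k - 1) \<le> n" by linarith
  moreover have "1 \<le> k * (2 * k - 1)"
    using assms(1) by (cases k) auto
  ultimately have "n \<ge> 1" by linarith
  let ?a = "B_series (Suc n) 0 (k - 1) $ n :: real"
  let ?d = "D_series (Suc n) (2 * k) $ Suc n :: real"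
  have "2 * ?a = ?d"
    using B_series_nth_eq_D_series_nth[OF assms(1) n] .
  moreover have "2 * A (2 * k) n = ?d"
    using assms(1) \<open>n \<ge> 1\<close> by (intro A_eq_D_series_nth) auto
  moreover have "real (Be k n) - real (Bo k n) = ?a"
    using assms(1) by (rule B_diff_eq_B_series_nth) simp
  moreover have "real (Ce k (n + 1)) - real (Co k (n + 1)) = ?a"
    using C_diff_eq_B_series_nth[OF assms(1), of "Suc n" "Suc n"] by simp
  moreover have "real (D (2 * k) (n + 1)) = ?d"
    using D_eq_D_series_nth[of "2 * k" "Suc n" "Suc n"] assms(1) by simp
  ultimately show ?thesis by simp
qed

end
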